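(* Consider the K-AVG algorithm (described in the context) run with stepsizes $\gamma_j>0$ and batch sizes $B_j\ge1$ (for outer iteration $j$) such that, for some constant $0<\delta<1$ and all $j$, $$1\ \ge\ \frac{L^2\gamma_j^2(K+1)(K-2)}{2}+L\gamma_jK\qquad\text{and}\qquad 1-\delta\ \ge\ L^2\gamma_j^2 .$$ Then for every $N\in\mathbb{N}$, $$\mathbb{E}\sum_{j=1}^N\frac{\gamma_j}{\sum_{i=1}^N\gamma_i}\big\|\nabla F(\widetilde w_j)\big\|_2^2\ \le\ \frac{2(F(\widetilde w_1)-F^* )}{(K-1+\delta)\sum_{i=1}^N\gamma_i}+\sum_{j=1}^N\frac{LK\gamma_j^2M}{B_j(K-1+\delta)\sum_{i=1}^N\gamma_i}\Big(\frac KP+\frac{L(2K-1)(K-1)\gamma_j}{6}\Big).$$ In particular, if $$\sum_{j=1}^\infty\gamma_j=\infty,\qquad \sum_{j=1}^\infty\frac{K\gamma_j^2}{PB_j}<\infty,\qquad \sum_{j=1}^\infty\gamma_j^3<\infty,$$ then $\mathbb{E}\sum_{j=1}^N\frac{\gamma_j}{\sum_{i=1}^N\gamma_i}\|\nabla F(\widetilde w_j)\|_2^2\to0$ as $N\to\infty$.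
   Context: Let $F:\mathbb{R}^d\to\mathbb{R}$ be continuously differentiable with $L$-Lipschitz gradient ($L>0$): $\|\nabla F(w)-\nabla F(w')\|_2\le L\|w-w'\|_2$ for all $w,w'$. Let $\xi$ be a random variable and $(w,\xi)\mapsto\nabla F(w;\xi)\in\mathbb{R}^d$ a stochastic gradient satisfying, for every fixed $w$, $\mathbb{E}_\xi\nabla F(w;\xi)=\nabla F(w)$ and $\mathbb{E}_\xi\|\nabla F(w;\xi)\|_2^2-\|\mathbb{E}_\xi\nabla F(w;\xi)\|_2^2\le M$ for a constant $M\ge0$. K-AVG algorithm with $P\ge1$ processors, delay $K\ge1$, stepsizes $\gamma_n>0$ and batch sizes $B_n\ge1$: start from a deterministic $\widetilde w_1\in\mathbb{R}^d$. For $n=1,2,\dots$: each processor $j=1,\dots,P$ sets $w^j_{n,0}=\widetilde w_n$ and for $k=1,\dots,K$ updates $w^j_{n,k}=w^j_{n,k-1}-\frac{\gamma_n}{B_n}\sum_{s=1}^{B_n}\nabla F(w^j_{n,k-1};\xi^j_{n,k,s})$; then $\widetilde w_{n+1}=\frac1P\sum_{j=1}^P w^j_{n,K}$. All samples $\xi^j_{n,k,s}$ (over all $n,j,k,s$) are i.i.d. copies of $\xi$. It is assumed that there is a scalar $F^*$ with $F\ge F^*$ on an open set containing all iterates (in particular $F(\widetilde w_n)\ge F^*$ for all $n$). $\mathbb{E}$ denotes total expectation over all samples. *)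

theory Defs
  imports "HOL-Probability.Probability"
begin

text \<open>Sample index (n, j, k, s): outer iteration n, processor j, local step k,
  minibatch element s. A sample path is a map from indices to sample values.\<close>

type_synonym sidx = "nat \<times> nat \<times> nat \<times> nat"

primrec kavg_local ::
  "('a::euclidean_space \<Rightarrow> 'x \<Rightarrow> 'a) \<Rightarrow> (nat \<Rightarrow> real) \<Rightarrow> (nat \<Rightarrow> nat)
   \<Rightarrow> (sidx \<Rightarrow> 'x) \<Rightarrow> nat \<Rightarrow> nat \<Rightarrow> 'a \<Rightarrow> nat \<Rightarrow> 'a" where
  "kavg_local G \<gamma> B \<omega> n j w 0 = w"
| "kavg_local G \<gamma> B \<omega> n j w (Suc k) =
     kavg_local G \<gamma> B \<omega> n j w k
     - (\<gamma> n / real (B n)) *\<^sub>R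
         (\<Sum>s=1..B n. G (kavg_local G \<gamma> B \<omega> n j w k) (\<omega> (n, j, Suc k, s)))"

text \<open>kavg_seq m is the averaged iterate w~_{m+1}.\<close>
primrec kavg_seq ::
  "('a::euclidean_space \<Rightarrow> 'x \<Rightarrow> 'a) \<Rightarrow> nat \<Rightarrow> nat \<Rightarrow> (nat \<Rightarrow> real) \<Rightarrow> (nat \<Rightarrow> nat)
   \<Rightarrow> 'a \<Rightarrow> (sidx \<Rightarrow> 'x) \<Rightarrow> nat \<Rightarrow> 'a" where
  "kavg_seq G P K \<gamma> B w1 \<omega> 0 = w1"
| "kavg_seq G P K \<gamma> B w1 \<omega> (Suc m) =
     (1 / real P) *\<^sub>R
       (\<Sum>j=1..P. kavg_local G \<gamma> B \<omega> (Suc m) j (kavg_seq G P K \<gamma> B w1 \<omega> m) K)"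

definition kavg_w ::
  "('a::euclidean_space \<Rightarrow> 'x \<Rightarrow> 'a) \<Rightarrow> nat \<Rightarrow> nat \<Rightarrow> (nat \<Rightarrow> real) \<Rightarrow> (nat \<Rightarrow> nat)
   \<Rightarrow> 'a \<Rightarrow> (sidx \<Rightarrow> 'x) \<Rightarrow> nat \<Rightarrow> 'a" where
  "kavg_w G P K \<gamma> B w1 \<omega> n = kavg_seq G P K \<gamma> B w1 \<omega> (n - 1)"

end

theory Submission
  imports Defs
begin

text \<open>By the descent lemma for the \<open>L\<close>-smooth \<open>F\<close>, one round changes \<open>F\<close> by at most a linear
  and a quadratic term in the averaged displacement \<open>-(\<gamma>\<^sub>n / P) \<Sum>\<^sub>j \<Sum>\<^sub>k g\<^sub>j\<^sub>k\<close>.  Freezing the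
  past, each minibatch gradient \<open>g\<^sub>j\<^sub>k\<close> is unbiased for \<open>\<nabla>F\<close> at its local iterate with variance
  at most \<open>M / B\<^sub>n\<close>, and the processors use independent samples, which bounds the second moment
  of the displacement.  Lipschitz continuity of \<open>\<nabla>F\<close> controls how far the local gradients drift
  from \<open>\<nabla>F(w\<^sub>n)\<close>, and the two step-size conditions absorb all local gradient norms except for
  \<open>-\<gamma>\<^sub>n (K - 1 + \<delta>) / 2 \<parallel>\<nabla>F(w\<^sub>n)\<parallel>\<^sup>2\<close>.  Telescoping over the rounds with \<open>F \<ge> F\<^sup>*\<close> gives
  the weighted bound; under the summability conditions its numerator stays bounded while
  \<open>\<Sum> \<gamma>\<^sub>i\<close> diverges.\<close>

section \<open>Independent blocks of coordinates of a product space\<close>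

definition splice_on :: "'i set \<Rightarrow> ('i \<Rightarrow> 'x) \<Rightarrow> ('i \<Rightarrow> 'x) \<Rightarrow> 'i \<Rightarrow> 'x" where
  "splice_on A \<omega> \<omega>' = (\<lambda>i. if i \<in> A then \<omega> i else \<omega>' i)"

definition depends_only_on :: "'i set \<Rightarrow> (('i \<Rightarrow> 'x) \<Rightarrow> 'b) \<Rightarrow> bool" where
  "depends_only_on A f \<longleftrightarrow> (\<forall>\<omega> \<omega>'. (\<forall>i\<in>A. \<omega> i = \<omega>' i) \<longrightarrow> f \<omega> = f \<omega>')"

lemma depends_only_on_splice_left: "depends_only_on A f \<Longrightarrow> f (splice_on A \<omega> \<omega>') = f \<omega>"
  unfolding depends_only_on_def by (erule allE[of _ "splice_on A \<omega> \<omega>'"], erule allE[of _ \<omega>], erule mp)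
    (simp add: splice_on_def)

lemma depends_only_on_splice_right: "depends_only_on (- A) f \<Longrightarrow> f (splice_on A \<omega> \<omega>') = f \<omega>'"
  unfolding depends_only_on_def by (erule allE[of _ "splice_on A \<omega> \<omega>'"], erule allE[of _ \<omega>'], erule mp)
    (simp add: splice_on_def)

lemma depends_only_on_comp: "depends_only_on A f \<Longrightarrow> depends_only_on A (\<lambda>\<omega>. h (f \<omega>))"
  unfolding depends_only_on_def by (intro allI impI) (drule spec, drule spec, drule mp, assumption, simp)

lemma depends_only_on_mono: "depends_only_on A f \<Longrightarrow> A \<subseteq> B \<Longrightarrow> depends_only_on B f"
  unfolding depends_only_on_def by blast

lemma depends_only_on_const: "depends_only_on A (\<lambda>_. c)"
  unfolding depends_only_on_def by simp

lemma depends_only_on_sum: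
  fixes f :: "'j \<Rightarrow> ('i \<Rightarrow> 'x) \<Rightarrow> 'b::comm_monoid_add"
  assumes "\<And>j. j \<in> J \<Longrightarrow> depends_only_on A (f j)"
  shows "depends_only_on A (\<lambda>\<omega>. \<Sum>j\<in>J. f j \<omega>)"
  unfolding depends_only_on_def
proof (intro allI impI)
  fix \<omega> \<omega>' :: "'i \<Rightarrow> 'x" assume "\<forall>i\<in>A. \<omega> i = \<omega>' i"
  then have "f j \<omega> = f j \<omega>'" if "j \<in> J" for j
    using assms[OF that] unfolding depends_only_on_def by blast
  then show "(\<Sum>j\<in>J. f j \<omega>) = (\<Sum>j\<in>J. f j \<omega>')" by (rule sum.cong[OF refl])
qed

lemma measurable_splice[measurable]:
  fixes A :: "'i set" and D :: "'x measure"
  shows "(\<lambda>(\<omega>, \<omega>'). splice_on A \<omega> \<omega>') \<in> PiM UNIV (\<lambda>_. D) \<Otimes>\<^sub>M PiM UNIV (\<lambda>_. D) \<rightarrow>\<^sub>M PiM UNIV (\<lambda>_. D)"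
proof (rule measurable_PiM_single')
  fix i
  show "(\<lambda>p. (case p of (\<omega>, \<omega>') \<Rightarrow> splice_on A \<omega> \<omega>') i) \<in> PiM UNIV (\<lambda>_. D) \<Otimes>\<^sub>M PiM UNIV (\<lambda>_. D) \<rightarrow>\<^sub>M D"
  proof (cases "i \<in> A")
    case True
    then have eq: "(\<lambda>p. (case p of (\<omega>, \<omega>') \<Rightarrow> splice_on A \<omega> \<omega>') i) = (\<lambda>p. fst p i)"
      by (auto simp: splice_on_def split: prod.splits)
    show ?thesis unfolding eq by measurable
  next
    case False
    then have eq: "(\<lambda>p. (case p of (\<omega>, \<omega>') \<Rightarrow> splice_on A \<omega> \<omega>') i) = (\<lambda>p. snd p i)"
      by (auto simp: splice_on_def split: prod.splits)
    show ?thesis unfolding eq by measurable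
  qed
qed (auto simp: space_pair_measure space_PiM splice_on_def PiE_iff)

text \<open>Both sides agree on cylinders, which factor along \<open>A\<close> and its complement.\<close>

lemma distr_splice:
  fixes A :: "'i set" and D :: "'x measure"
  assumes D: "prob_space D"
  shows "distr (PiM UNIV (\<lambda>_. D) \<Otimes>\<^sub>M PiM UNIV (\<lambda>_. D)) (PiM UNIV (\<lambda>_. D)) (\<lambda>(\<omega>, \<omega>'). splice_on A \<omega> \<omega>')
    = PiM UNIV (\<lambda>_. D)" (is "?L = ?\<Omega>")
proof (rule measure_eqI_PiM_infinite[symmetric, OF refl])
  interpret O: prob_space ?\<Omega> using D by (intro prob_space_PiM) auto
  show "finite_measure ?\<Omega>" by unfold_locales
  show "sets ?L = sets ?\<Omega>" by simp
  fix J :: "'i set" and X assume J: "finite J" and X: "\<And>i. i \<in> J \<Longrightarrow> X i \<in> sets D"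
  let ?C = "\<lambda>J. prod_emb UNIV (\<lambda>_. D) J (Pi\<^sub>E J X)"
  have cyl: "?\<Omega> (?C J') = (\<Prod>i\<in>J'. emeasure D (X i))" if "J' \<subseteq> J" for J'
    using D J X that finite_subset[OF that] by (intro emeasure_PiM_emb) auto
  have "(\<lambda>(\<omega>, \<omega>'). splice_on A \<omega> \<omega>') -` ?C J \<inter> space (?\<Omega> \<Otimes>\<^sub>M ?\<Omega>) = ?C (J \<inter> A) \<times> ?C (J - A)"
    by (auto simp: prod_emb_def space_pair_measure space_PiM splice_on_def PiE_iff split: if_splits)
  then have "?L (?C J) = (?\<Omega> \<Otimes>\<^sub>M ?\<Omega>) (?C (J \<inter> A) \<times> ?C (J - A))"
    using J X by (subst emeasure_distr) (auto intro!: sets_PiM_I)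
  also have "\<dots> = ?\<Omega> (?C (J \<inter> A)) * ?\<Omega> (?C (J - A))"
    using J X by (intro O.emeasure_pair_measure_Times sets_PiM_I) auto
  also have "\<dots> = (\<Prod>i\<in>J \<inter> A. emeasure D (X i)) * (\<Prod>i\<in>J - A. emeasure D (X i))"
    by (simp add: cyl)
  also have "\<dots> = (\<Prod>i\<in>J. emeasure D (X i))"
    using J by (subst prod.union_disjoint[symmetric]) (auto intro!: prod.cong)
  finally show "?\<Omega> (?C J) = ?L (?C J)" using cyl[of J] by simp
qed

locale iid_samples =
  fixes D :: "'x measure"
  assumes prob_space_D: "prob_space D"
begin

abbreviation \<Omega> :: "('i \<Rightarrow> 'x) measure" where "\<Omega> \<equiv> PiM UNIV (\<lambda>_. D)"

lemma prob_space_\<Omega>: "prob_space \<Omega>"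
  using prob_space_D by (intro prob_space_PiM) auto

lemma nn_integral_splice:
  fixes f :: "('i \<Rightarrow> 'x) \<Rightarrow> ennreal"
  assumes [measurable]: "f \<in> borel_measurable \<Omega>"
  shows "(\<integral>\<^sup>+\<omega>. f \<omega> \<partial>\<Omega>) = (\<integral>\<^sup>+\<omega>. \<integral>\<^sup>+\<omega>'. f (splice_on A \<omega> \<omega>') \<partial>\<Omega> \<partial>\<Omega>)"
proof -
  interpret O: prob_space "\<Omega> :: ('i \<Rightarrow> 'x) measure" by (rule prob_space_\<Omega>)
  have "(\<integral>\<^sup>+\<omega>. f \<omega> \<partial>\<Omega>) = (\<integral>\<^sup>+\<omega>. f \<omega> \<partial>distr (\<Omega> \<Otimes>\<^sub>M \<Omega>) \<Omega> (\<lambda>(\<omega>, \<omega>'). splice_on A \<omega> \<omega>'))"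
    using distr_splice[OF prob_space_D, of A] by simp
  also have "\<dots> = (\<integral>\<^sup>+p. f (case p of (\<omega>, \<omega>') \<Rightarrow> splice_on A \<omega> \<omega>') \<partial>(\<Omega> \<Otimes>\<^sub>M \<Omega>))"
    by (rule nn_integral_distr) measurable
  also have "\<dots> = (\<integral>\<^sup>+\<omega>. \<integral>\<^sup>+\<omega>'. f (splice_on A \<omega> \<omega>') \<partial>\<Omega> \<partial>\<Omega>)"
    using O.nn_integral_fst[of "\<lambda>p. f (case p of (\<omega>, \<omega>') \<Rightarrow> splice_on A \<omega> \<omega>')" \<Omega>] by simp
  finally show ?thesis .
qed

lemma integral_splice:
  fixes f :: "('i \<Rightarrow> 'x) \<Rightarrow> 'b::{banach, second_countable_topology}"
  assumes f: "integrable \<Omega> f"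
  shows "(\<integral>\<omega>. f \<omega> \<partial>\<Omega>) = (\<integral>\<omega>. \<integral>\<omega>'. f (splice_on A \<omega> \<omega>') \<partial>\<Omega> \<partial>\<Omega>)"
proof -
  interpret O: prob_space "\<Omega> :: ('i \<Rightarrow> 'x) measure" by (rule prob_space_\<Omega>)
  interpret OO: pair_sigma_finite "\<Omega> :: ('i \<Rightarrow> 'x) measure" "\<Omega> :: ('i \<Rightarrow> 'x) measure" by unfold_locales
  have [measurable]: "f \<in> borel_measurable \<Omega>" using f by auto
  have d: "distr (\<Omega> \<Otimes>\<^sub>M \<Omega>) \<Omega> (\<lambda>(\<omega>, \<omega>'). splice_on A \<omega> \<omega>') = \<Omega>"
    by (rule distr_splice[OF prob_space_D])
  have i: "integrable (\<Omega> \<Otimes>\<^sub>M \<Omega>) (\<lambda>p. f (case p of (\<omega>, \<omega>') \<Rightarrow> splice_on A \<omega> \<omega>'))"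
    using integrable_distr_eq[of "\<lambda>(\<omega>, \<omega>'). splice_on A \<omega> \<omega>'" "\<Omega> \<Otimes>\<^sub>M \<Omega>" \<Omega> f] f d by simp
  have "(\<integral>\<omega>. f \<omega> \<partial>\<Omega>) = (\<integral>\<omega>. f \<omega> \<partial>distr (\<Omega> \<Otimes>\<^sub>M \<Omega>) \<Omega> (\<lambda>(\<omega>, \<omega>'). splice_on A \<omega> \<omega>'))"
    by (simp add: d)
  also have "\<dots> = (\<integral>p. f (case p of (\<omega>, \<omega>') \<Rightarrow> splice_on A \<omega> \<omega>') \<partial>(\<Omega> \<Otimes>\<^sub>M \<Omega>))"
    by (rule integral_distr) measurable
  also have "\<dots> = (\<integral>\<omega>. \<integral>\<omega>'. f (splice_on A \<omega> \<omega>') \<partial>\<Omega> \<partial>\<Omega>)"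
    using OO.integral_fst'[OF i] by simp
  finally show ?thesis .
qed

lemma nn_integral_freeze:
  fixes u :: "('i \<Rightarrow> 'x) \<Rightarrow> 'a"
  assumes "(\<lambda>\<omega>. \<psi> (u \<omega>) \<omega>) \<in> borel_measurable \<Omega>"
    and "depends_only_on A u" and "\<And>v. depends_only_on (- A) (\<psi> v)"
  shows "(\<integral>\<^sup>+\<omega>. \<psi> (u \<omega>) \<omega> \<partial>\<Omega>) = (\<integral>\<^sup>+\<omega>. \<integral>\<^sup>+\<omega>'. \<psi> (u \<omega>) \<omega>' \<partial>\<Omega> \<partial>\<Omega>)"
  using nn_integral_splice[OF assms(1), of A]
  by (simp add: depends_only_on_splice_left[OF assms(2)] depends_only_on_splice_right[OF assms(3)])

lemma integral_freeze:
  fixes u :: "('i \<Rightarrow> 'x) \<Rightarrow> 'a" and \<psi> :: "'a \<Rightarrow> _ \<Rightarrow> 'b::{banach, second_countable_topology}"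
  assumes "integrable \<Omega> (\<lambda>\<omega>. \<psi> (u \<omega>) \<omega>)"
    and "depends_only_on A u" and "\<And>v. depends_only_on (- A) (\<psi> v)"
  shows "(\<integral>\<omega>. \<psi> (u \<omega>) \<omega> \<partial>\<Omega>) = (\<integral>\<omega>. \<integral>\<omega>'. \<psi> (u \<omega>) \<omega>' \<partial>\<Omega> \<partial>\<Omega>)"
  using integral_splice[OF assms(1), of A]
  by (simp add: depends_only_on_splice_left[OF assms(2)] depends_only_on_splice_right[OF assms(3)])

lemma integrable_inner_independent:
  fixes f g :: "('i \<Rightarrow> 'x) \<Rightarrow> 'a::euclidean_space"
  assumes f: "integrable \<Omega> f" and g: "integrable \<Omega> g"
    and df: "depends_only_on A f" and dg: "depends_only_on (- A) g"
  shows "integrable \<Omega> (\<lambda>\<omega>. f \<omega> \<bullet> g \<omega>)"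
proof -
  have [measurable]: "f \<in> borel_measurable \<Omega>" "g \<in> borel_measurable \<Omega>" using f g by auto
  have "(\<integral>\<^sup>+\<omega>. norm (f \<omega> \<bullet> g \<omega>) \<partial>\<Omega>) \<le> (\<integral>\<^sup>+\<omega>. ennreal (norm (f \<omega>)) * ennreal (norm (g \<omega>)) \<partial>\<Omega>)"
    by (intro nn_integral_mono) (simp add: ennreal_mult[symmetric] Cauchy_Schwarz_ineq2)
  also have "\<dots> = (\<integral>\<^sup>+\<omega>. \<integral>\<^sup>+\<omega>'. ennreal (norm (f \<omega>)) * ennreal (norm (g \<omega>')) \<partial>\<Omega> \<partial>\<Omega>)"
    by (rule nn_integral_freeze[where \<psi>="\<lambda>v \<omega>. ennreal (norm v) * ennreal (norm (g \<omega>))", OF _ df])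
      (auto intro: depends_only_on_comp[OF dg])
  also have "\<dots> = (\<integral>\<^sup>+\<omega>. ennreal (norm (f \<omega>)) \<partial>\<Omega>) * (\<integral>\<^sup>+\<omega>. ennreal (norm (g \<omega>)) \<partial>\<Omega>)"
    by (simp add: nn_integral_cmult nn_integral_multc)
  also have "\<dots> < \<infinity>"
    using f g unfolding integrable_iff_bounded by (simp add: ennreal_mult_less_top)
  finally show ?thesis by (simp add: integrable_iff_bounded)
qed

lemma integral_inner_independent:
  fixes f g :: "('i \<Rightarrow> 'x) \<Rightarrow> 'a::euclidean_space"
  assumes f: "integrable \<Omega> f" and g: "integrable \<Omega> g"
    and df: "depends_only_on A f" and dg: "depends_only_on (- A) g"
  shows "(\<integral>\<omega>. f \<omega> \<bullet> g \<omega> \<partial>\<Omega>) = integral\<^sup>L \<Omega> f \<bullet> integral\<^sup>L \<Omega> g"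
proof -
  have "(\<integral>\<omega>. f \<omega> \<bullet> g \<omega> \<partial>\<Omega>) = (\<integral>\<omega>. \<integral>\<omega>'. f \<omega> \<bullet> g \<omega>' \<partial>\<Omega> \<partial>\<Omega>)"
    by (rule integral_freeze[where \<psi>="\<lambda>v \<omega>. v \<bullet> g \<omega>", OF integrable_inner_independent[OF assms] df])
      (auto intro: depends_only_on_comp[OF dg])
  also have "\<dots> = (\<integral>\<omega>. f \<omega> \<bullet> integral\<^sup>L \<Omega> g \<partial>\<Omega>)"
    using g by simp
  also have "\<dots> = integral\<^sup>L \<Omega> f \<bullet> integral\<^sup>L \<Omega> g"
    using f by simp
  finally show ?thesis .
qed

lemma integral_norm_sum_independent:
  fixes X :: "'j \<Rightarrow> ('i \<Rightarrow> 'x) \<Rightarrow> 'a::euclidean_space"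
  assumes J: "finite J"
    and X: "\<And>j. j \<in> J \<Longrightarrow> integrable \<Omega> (X j)"
    and X2: "\<And>j. j \<in> J \<Longrightarrow> integrable \<Omega> (\<lambda>\<omega>. (norm (X j \<omega>))\<^sup>2)"
    and dep: "\<And>j. j \<in> J \<Longrightarrow> depends_only_on (A j) (X j)"
    and disj: "\<And>i j. i \<in> J \<Longrightarrow> j \<in> J \<Longrightarrow> i \<noteq> j \<Longrightarrow> A i \<inter> A j = {}"
  shows "integrable \<Omega> (\<lambda>\<omega>. (norm (\<Sum>j\<in>J. X j \<omega>))\<^sup>2)"
    and "(\<integral>\<omega>. (norm (\<Sum>j\<in>J. X j \<omega>))\<^sup>2 \<partial>\<Omega>)
      = (norm (\<Sum>j\<in>J. integral\<^sup>L \<Omega> (X j)))\<^sup>2 + (\<Sum>j\<in>J. (\<integral>\<omega>. (norm (X j \<omega>))\<^sup>2 \<partial>\<Omega>) - (norm (integral\<^sup>L \<Omega> (X j)))\<^sup>2)"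
proof -
  define \<mu> where "\<mu> j = integral\<^sup>L \<Omega> (X j)" for j
  have pair: "integrable \<Omega> (\<lambda>\<omega>. X i \<omega> \<bullet> X j \<omega>) \<and> (\<integral>\<omega>. X i \<omega> \<bullet> X j \<omega> \<partial>\<Omega>)
      = \<mu> i \<bullet> \<mu> j + (if i = j then (\<integral>\<omega>. (norm (X i \<omega>))\<^sup>2 \<partial>\<Omega>) - (norm (\<mu> i))\<^sup>2 else 0)"
    if "i \<in> J" "j \<in> J" for i j
  proof (cases "i = j")
    case True
    then show ?thesis using X2[OF that(1)] by (simp add: power2_norm_eq_inner)
  next
    case False
    have "depends_only_on (- A i) (X j)"
      using depends_only_on_mono[OF dep[OF that(2)]] disj[OF that False] by blast
    then show ?thesis
      using integrable_inner_independent[OF X X dep] integral_inner_independent[OF X X dep] that False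
      by (simp add: \<mu>_def)
  qed
  have sq: "(norm (\<Sum>j\<in>J. x j))\<^sup>2 = (\<Sum>i\<in>J. \<Sum>j\<in>J. x i \<bullet> x j)" for x :: "'j \<Rightarrow> 'a"
    by (simp only: power2_norm_eq_inner inner_sum_left inner_sum_right) (rule sum.swap)
  show "integrable \<Omega> (\<lambda>\<omega>. (norm (\<Sum>j\<in>J. X j \<omega>))\<^sup>2)"
    unfolding sq using pair by auto
  have "(\<integral>\<omega>. (norm (\<Sum>j\<in>J. X j \<omega>))\<^sup>2 \<partial>\<Omega>) = (\<Sum>i\<in>J. \<Sum>j\<in>J. \<mu> i \<bullet> \<mu> j
      + (if i = j then (\<integral>\<omega>. (norm (X i \<omega>))\<^sup>2 \<partial>\<Omega>) - (norm (\<mu> i))\<^sup>2 else 0))"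
    unfolding sq using pair by (simp add: integral_sum)
  also have "\<dots> = (norm (\<Sum>j\<in>J. \<mu> j))\<^sup>2 + (\<Sum>j\<in>J. (\<integral>\<omega>. (norm (X j \<omega>))\<^sup>2 \<partial>\<Omega>) - (norm (\<mu> j))\<^sup>2)"
    using J by (simp add: sq sum.distrib sum.delta')
  finally show "(\<integral>\<omega>. (norm (\<Sum>j\<in>J. X j \<omega>))\<^sup>2 \<partial>\<Omega>)
      = (norm (\<Sum>j\<in>J. integral\<^sup>L \<Omega> (X j)))\<^sup>2 + (\<Sum>j\<in>J. (\<integral>\<omega>. (norm (X j \<omega>))\<^sup>2 \<partial>\<Omega>) - (norm (integral\<^sup>L \<Omega> (X j)))\<^sup>2)"
    by (simp add: \<mu>_def)
qed

lemma
  fixes f :: "'x \<Rightarrow> 'b::{banach, second_countable_topology}"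
  assumes f: "integrable D f"
  shows integrable_coordinate: "integrable \<Omega> (\<lambda>\<omega>. f (\<omega> i))"
    and integral_coordinate: "(\<integral>\<omega>. f (\<omega> i) \<partial>\<Omega>) = (\<integral>x. f x \<partial>D)"
proof -
  have d: "distr \<Omega> D (\<lambda>\<omega>. \<omega> i) = D"
    using distr_PiM_component[of UNIV "\<lambda>_. D" i] prob_space_D by simp
  have m: "(\<lambda>\<omega>. \<omega> i) \<in> \<Omega> \<rightarrow>\<^sub>M D" by measurable
  have fm: "f \<in> borel_measurable D" using f by auto
  show "integrable \<Omega> (\<lambda>\<omega>. f (\<omega> i))"
    using integrable_distr_eq[OF m fm] f d by simp
  show "(\<integral>\<omega>. f (\<omega> i) \<partial>\<Omega>) = (\<integral>x. f x \<partial>D)"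
    using integral_distr[OF m fm] d by simp
qed

lemma splice_on_space: "\<omega> \<in> space \<Omega> \<Longrightarrow> \<omega>' \<in> space \<Omega> \<Longrightarrow> splice_on A \<omega> \<omega>' \<in> space \<Omega>"
  by (auto simp: space_PiM PiE_iff splice_on_def)

lemma measurable_nn_integral_freeze:
  fixes u :: "('i \<Rightarrow> 'x) \<Rightarrow> 'a"
  assumes m: "(\<lambda>\<omega>. \<psi> (u \<omega>) \<omega>) \<in> borel_measurable \<Omega>"
    and du: "depends_only_on A u" and d\<psi>: "\<And>v. depends_only_on (- A) (\<psi> v)"
  shows "(\<lambda>\<omega>. \<integral>\<^sup>+\<omega>'. \<psi> (u \<omega>) \<omega>' \<partial>\<Omega>) \<in> borel_measurable \<Omega>"
proof -
  interpret O: prob_space "\<Omega> :: ('i \<Rightarrow> 'x) measure" by (rule prob_space_\<Omega>)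
  have "(\<lambda>(\<omega>, \<omega>'). \<psi> (u (splice_on A \<omega> \<omega>')) (splice_on A \<omega> \<omega>')) \<in> borel_measurable (\<Omega> \<Otimes>\<^sub>M \<Omega>)"
    using measurable_compose[OF measurable_splice m] by (simp add: case_prod_beta')
  then have "(\<lambda>\<omega>. \<integral>\<^sup>+\<omega>'. \<psi> (u (splice_on A \<omega> \<omega>')) (splice_on A \<omega> \<omega>') \<partial>\<Omega>) \<in> borel_measurable \<Omega>"
    by (rule O.borel_measurable_nn_integral)
  then show ?thesis
    by (simp add: depends_only_on_splice_left[OF du] depends_only_on_splice_right[OF d\<psi>])
qed

end

section \<open>Smoothness and elementary inequalities\<close>

lemma norm_add_squared_le:
  fixes x y :: "'a::real_normed_vector"
  shows "(norm (x + y))\<^sup>2 \<le> 2 * (norm x)\<^sup>2 + 2 * (norm y)\<^sup>2"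
proof -
  have "(norm (x + y))\<^sup>2 \<le> (norm x + norm y)\<^sup>2"
    by (intro power_mono norm_triangle_ineq) auto
  also have "\<dots> \<le> 2 * (norm x)\<^sup>2 + 2 * (norm y)\<^sup>2"
    using sum_squares_bound[of "norm x" "norm y"] by (simp add: power2_eq_square algebra_simps)
  finally show ?thesis .
qed

lemma norm_sum_squared_le:
  fixes x :: "'i \<Rightarrow> 'a::real_normed_vector"
  shows "(norm (\<Sum>i\<in>I. x i))\<^sup>2 \<le> real (card I) * (\<Sum>i\<in>I. (norm (x i))\<^sup>2)"
proof -
  have "(norm (\<Sum>i\<in>I. x i))\<^sup>2 \<le> (\<Sum>i\<in>I. 1 * norm (x i))\<^sup>2"
    by (intro power_mono) (auto intro: norm_sum)
  also have "\<dots> \<le> (\<Sum>i\<in>I. 1\<^sup>2) * (\<Sum>i\<in>I. (norm (x i))\<^sup>2)"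
    by (rule Cauchy_Schwarz_ineq_sum)
  finally show ?thesis by simp
qed

lemma borel_measurable_GDERIV:
  assumes "\<And>w. GDERIV F w :> gradF w"
  shows "F \<in> borel_measurable borel"
  using assms by (intro borel_measurable_continuous_onI continuous_at_imp_continuous_on)
    (auto simp: gderiv_def intro: has_derivative_continuous)

lemma descent_lemma:
  fixes F :: "'a::euclidean_space \<Rightarrow> real"
  assumes grad: "\<And>w. GDERIV F w :> gradF w"
    and lip: "\<And>w w'. norm (gradF w - gradF w') \<le> L * norm (w - w')"
  shows "F y \<le> F x + gradF x \<bullet> (y - x) + L / 2 * (norm (y - x))\<^sup>2"
proof -
  define d where "d = y - x"
  define \<phi> where "\<phi> t = F (x + t *\<^sub>R d) - t * (gradF x \<bullet> d) - L / 2 * t\<^sup>2 * (norm d)\<^sup>2" for t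
  have der: "(\<phi> has_real_derivative (gradF (x + t *\<^sub>R d) \<bullet> d - gradF x \<bullet> d - L * t * (norm d)\<^sup>2)) (at t)" for t
  proof -
    have "((\<lambda>t. x + t *\<^sub>R d) has_derivative (\<lambda>h. h *\<^sub>R d)) (at t)"
      by (auto intro!: derivative_eq_intros)
    moreover have "(F has_derivative (\<lambda>h. h \<bullet> gradF (x + t *\<^sub>R d))) (at (x + t *\<^sub>R d))"
      using grad[of "x + t *\<^sub>R d"] by (simp add: gderiv_def)
    ultimately have "((\<lambda>t. F (x + t *\<^sub>R d)) has_derivative (\<lambda>h. (h *\<^sub>R d) \<bullet> gradF (x + t *\<^sub>R d))) (at t)"
      by (rule has_derivative_compose)
    then have "((\<lambda>t. F (x + t *\<^sub>R d)) has_real_derivative (gradF (x + t *\<^sub>R d) \<bullet> d)) (at t)"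
      by (simp add: has_field_derivative_def inner_commute mult.commute[of _ "d \<bullet> _"])
    then show ?thesis unfolding \<phi>_def
      by (auto intro!: derivative_eq_intros simp: power2_eq_square)
  qed
  have "\<phi> 1 \<le> \<phi> 0"
  proof (rule DERIV_nonpos_imp_nonincreasing[of 0 1 \<phi>])
    fix t :: real assume t: "0 \<le> t" "t \<le> 1"
    have "gradF (x + t *\<^sub>R d) \<bullet> d - gradF x \<bullet> d \<le> norm (gradF (x + t *\<^sub>R d) - gradF x) * norm d"
      by (metis Cauchy_Schwarz_ineq2 abs_le_D1 inner_diff_left)
    also have "\<dots> \<le> L * norm (t *\<^sub>R d) * norm d"
      using lip[of "x + t *\<^sub>R d" x] by (intro mult_right_mono) auto
    also have "\<dots> = L * t * (norm d)\<^sup>2"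
      using t by (simp add: power2_eq_square)
    finally show "\<exists>y. (\<phi> has_real_derivative y) (at t) \<and> y \<le> 0"
      using der[of t] by auto
  qed simp
  then show ?thesis unfolding \<phi>_def d_def by simp
qed

lemma descent_lemma_lower:
  fixes F :: "'a::euclidean_space \<Rightarrow> real"
  assumes grad: "\<And>w. GDERIV F w :> gradF w"
    and lip: "\<And>w w'. norm (gradF w - gradF w') \<le> L * norm (w - w')"
  shows "F x + gradF x \<bullet> (y - x) - L / 2 * (norm (y - x))\<^sup>2 \<le> F y"
proof -
  have "GDERIV (\<lambda>w. - F w) w :> - gradF w" for w
    using grad[of w] unfolding gderiv_def by (auto intro!: derivative_eq_intros)
  moreover have "norm (- gradF w - - gradF w') \<le> L * norm (w - w')" for w w'
    using lip[of w w'] by (simp add: norm_minus_commute[of "gradF w"])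
  ultimately show ?thesis using descent_lemma[of "\<lambda>w. - F w" "\<lambda>w. - gradF w" L y x] by simp
qed

lemma
  fixes f :: "'b \<Rightarrow> real"
  assumes "f \<in> borel_measurable N" and "\<And>x. 0 \<le> f x" and "0 \<le> c"
    and le: "(\<integral>\<^sup>+x. ennreal (f x) \<partial>N) \<le> ennreal c"
  shows integrable_of_nn_integral_le: "integrable N f"
    and integral_le_of_nn_integral_le: "integral\<^sup>L N f \<le> c"
proof -
  have "(\<integral>\<^sup>+x. ennreal (f x) \<partial>N) < \<infinity>" using le by (rule le_less_trans) simp
  then show i: "integrable N f" unfolding integrable_iff_bounded using assms by simp
  have "ennreal (integral\<^sup>L N f) \<le> ennreal c"
    using nn_integral_eq_integral[OF i] assms le by simp
  then show "integral\<^sup>L N f \<le> c" using ennreal_le_iff[OF \<open>0 \<le> c\<close>] by simp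
qed

lemma (in finite_measure) square_norm_integrable_imp_integrable:
  fixes g :: "'a \<Rightarrow> 'b::{banach, second_countable_topology}"
  assumes "g \<in> borel_measurable M" and "integrable M (\<lambda>x. (norm (g x))\<^sup>2)"
  shows "integrable M g"
proof (rule Bochner_Integration.integrable_bound)
  show "integrable M (\<lambda>x. 1 + (norm (g x))\<^sup>2)" using assms by auto
  show "AE x in M. norm (g x) \<le> norm (1 + (norm (g x))\<^sup>2)"
  proof (intro AE_I2)
    fix x
    have "norm (g x) \<le> 1 + (norm (g x))\<^sup>2"
    proof (cases "norm (g x) \<le> 1")
      case False
      then have "norm (g x) * 1 \<le> norm (g x) * norm (g x)" by (intro mult_left_mono) auto
      then show ?thesis by (simp add: power2_eq_square)
    qed (simp add: add_increasing2)
    then show "norm (g x) \<le> norm (1 + (norm (g x))\<^sup>2)" by simp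
  qed
qed (use assms in auto)

lemma (in prob_space) norm_integral_squared_le:
  fixes h :: "'a \<Rightarrow> 'b::euclidean_space"
  assumes h: "integrable M h" and h2: "integrable M (\<lambda>x. (norm (h x))\<^sup>2)"
  shows "(norm (integral\<^sup>L M h))\<^sup>2 \<le> (\<integral>x. (norm (h x))\<^sup>2 \<partial>M)"
proof -
  define \<mu> where "\<mu> = integral\<^sup>L M h"
  have "(norm \<mu>)\<^sup>2 = (\<integral>x. \<mu> \<bullet> h x \<partial>M)" using h by (simp add: \<mu>_def power2_norm_eq_inner)
  also have "\<dots> \<le> (\<integral>x. ((norm \<mu>)\<^sup>2 + (norm (h x))\<^sup>2) / 2 \<partial>M)"
  proof (rule integral_mono)
    fix x
    have "\<mu> \<bullet> h x \<le> norm \<mu> * norm (h x)" by (rule Cauchy_Schwarz_ineq2[THEN abs_le_D1])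
    also have "\<dots> \<le> ((norm \<mu>)\<^sup>2 + (norm (h x))\<^sup>2) / 2"
      using sum_squares_bound[of "norm \<mu>" "norm (h x)"] by (simp add: power2_eq_square)
    finally show "\<mu> \<bullet> h x \<le> ((norm \<mu>)\<^sup>2 + (norm (h x))\<^sup>2) / 2" .
  qed (use h h2 in auto)
  also have "\<dots> = ((norm \<mu>)\<^sup>2 + (\<integral>x. (norm (h x))\<^sup>2 \<partial>M)) / 2"
    using h2 by (simp add: prob_space)
  finally show ?thesis by (simp add: \<mu>_def)
qed

lemma (in prob_space)
  fixes F :: "'b::euclidean_space \<Rightarrow> real" and d :: "'a \<Rightarrow> 'b"
  assumes grad: "\<And>w. GDERIV F w :> gradF w"
    and lip: "\<And>w w'. norm (gradF w - gradF w') \<le> L * norm (w - w')" and L: "0 \<le> L"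
    and d: "integrable M d" and d2: "integrable M (\<lambda>\<omega>. (norm (d \<omega>))\<^sup>2)"
  shows integrable_descent: "integrable M (\<lambda>\<omega>. F (v + d \<omega>))"
    and expectation_descent_lemma:
      "(\<integral>\<omega>. F (v + d \<omega>) \<partial>M) \<le> F v + gradF v \<bullet> integral\<^sup>L M d + L / 2 * (\<integral>\<omega>. (norm (d \<omega>))\<^sup>2 \<partial>M)"
proof -
  have up: "F (v + d \<omega>) \<le> F v + gradF v \<bullet> d \<omega> + L / 2 * (norm (d \<omega>))\<^sup>2" for \<omega>
    using descent_lemma[OF grad lip, of "v + d \<omega>" v] by simp
  have lo: "F v + gradF v \<bullet> d \<omega> - L / 2 * (norm (d \<omega>))\<^sup>2 \<le> F (v + d \<omega>)" for \<omega>
    using descent_lemma_lower[OF grad lip, of v "v + d \<omega>"] by simp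
  have [measurable]: "F \<in> borel_measurable borel" by (rule borel_measurable_GDERIV[OF grad])
  have [measurable]: "d \<in> borel_measurable M" using d by auto
  show i: "integrable M (\<lambda>\<omega>. F (v + d \<omega>))"
  proof (rule Bochner_Integration.integrable_bound)
    show "integrable M (\<lambda>\<omega>. \<bar>F v\<bar> + \<bar>gradF v \<bullet> d \<omega>\<bar> + L / 2 * (norm (d \<omega>))\<^sup>2)"
      using d d2 by auto
    show "AE \<omega> in M. norm (F (v + d \<omega>)) \<le> norm (\<bar>F v\<bar> + \<bar>gradF v \<bullet> d \<omega>\<bar> + L / 2 * (norm (d \<omega>))\<^sup>2)"
      using up lo L by (intro AE_I2) (simp add: abs_le_iff; smt (verit) zero_le_power2 mult_nonneg_nonneg)
  qed simp
  have "(\<integral>\<omega>. F (v + d \<omega>) \<partial>M) \<le> (\<integral>\<omega>. F v + gradF v \<bullet> d \<omega> + L / 2 * (norm (d \<omega>))\<^sup>2 \<partial>M)"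
    by (rule integral_mono[OF i _ up]) (use d d2 in auto)
  also have "\<dots> = F v + gradF v \<bullet> integral\<^sup>L M d + L / 2 * (\<integral>\<omega>. (norm (d \<omega>))\<^sup>2 \<partial>M)"
    using d d2 by (simp add: prob_space)
  finally show "(\<integral>\<omega>. F (v + d \<omega>) \<partial>M) \<le> F v + gradF v \<bullet> integral\<^sup>L M d + L / 2 * (\<integral>\<omega>. (norm (d \<omega>))\<^sup>2 \<partial>M)" .
qed

section \<open>Arithmetic of the bounds\<close>

lemma sum_of_nat_minus_one: "(\<Sum>k=1..n. real k - 1) = real n * (real n - 1) / 2"
  by (induction n) (auto simp: algebra_simps)

lemma sum_of_nat_minus_one_squared:
  "(\<Sum>k=1..n. (real k - 1)\<^sup>2) = (real n - 1) * real n * (2 * real n - 1) / 6"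
  by (induction n) (auto simp: algebra_simps power2_eq_square)

lemma sum_of_nat_minus_one_greaterThan:
  assumes "i \<le> K"
  shows "(\<Sum>k\<in>{i<..K}. real k - 1) = real K * (real K - 1) / 2 - real i * (real i - 1) / 2"
proof -
  have "{1..K} = {1..i} \<union> {i<..K}" using assms by auto
  then have "(\<Sum>k=1..K. real k - 1) = (\<Sum>k=1..i. real k - 1) + (\<Sum>k\<in>{i<..K}. real k - 1)"
    by (simp add: sum.union_disjoint[symmetric] ivl_disj_int)
  then show ?thesis using sum_of_nat_minus_one[of K] sum_of_nat_minus_one[of i] by linarith
qed

lemma sum_weighted_prefix_sums:
  fixes H :: "nat \<Rightarrow> real"
  shows "(\<Sum>k=1..K. (real k - 1) * (\<Sum>i\<in>{1..<k}. H i)) = (\<Sum>i=1..K. H i * (\<Sum>k\<in>{i<..K}. real k - 1))"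
proof -
  have "(\<Sum>k=1..K. (real k - 1) * (\<Sum>i\<in>{1..<k}. H i))
      = (\<Sum>k\<in>{1..K}. \<Sum>i\<in>{i\<in>{1..K}. i < k}. (real k - 1) * H i)"
    by (intro sum.cong refl) (auto simp: sum_distrib_left intro!: sum.cong)
  also have "\<dots> = (\<Sum>i\<in>{1..K}. \<Sum>k\<in>{k\<in>{1..K}. i < k}. (real k - 1) * H i)"
    by (rule sum.swap_restrict) auto
  also have "\<dots> = (\<Sum>i=1..K. H i * (\<Sum>k\<in>{i<..K}. real k - 1))"
    by (intro sum.cong refl) (auto simp: sum_distrib_left mult.commute intro!: sum.cong)
  finally show ?thesis .
qed

text \<open>The first step-size condition makes all weights but the first one nonnegative; the two
  conditions together bound the first weight, which multiplies \<open>H 1\<close>, from below by \<open>\<delta> - 1\<close>.\<close>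

lemma stepsize_weighted_sum_lower:
  fixes H :: "nat \<Rightarrow> real" and L \<gamma> \<delta> :: real
  assumes K: "K \<ge> 1" and H: "\<And>k. H k \<ge> 0"
    and step1: "1 \<ge> L\<^sup>2 * \<gamma>\<^sup>2 * (real K + 1) * (real K - 2) / 2 + L * \<gamma> * real K"
    and step2: "1 - \<delta> \<ge> L\<^sup>2 * \<gamma>\<^sup>2"
  shows "(\<delta> - 1) * H 1 \<le> (\<Sum>i=1..K. H i * (1 - L * \<gamma> * real K - L\<^sup>2 * \<gamma>\<^sup>2 * (\<Sum>k\<in>{i<..K}. real k - 1)))"
proof -
  define w where "w i = 1 - L * \<gamma> * real K - L\<^sup>2 * \<gamma>\<^sup>2 * (\<Sum>k\<in>{i<..K}. real k - 1)" for i
  have w_nonneg: "w i \<ge> 0" if i: "i \<in> {2..K}" for i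
  proof -
    have "2 * 1 \<le> real i * (real i - 1)" using i by (intro mult_mono) auto
    then have "(\<Sum>k\<in>{i<..K}. real k - 1) \<le> (real K + 1) * (real K - 2) / 2"
      using i by (subst sum_of_nat_minus_one_greaterThan) (auto simp: field_simps)
    then have "L\<^sup>2 * \<gamma>\<^sup>2 * (\<Sum>k\<in>{i<..K}. real k - 1) \<le> L\<^sup>2 * \<gamma>\<^sup>2 * ((real K + 1) * (real K - 2) / 2)"
      by (intro mult_left_mono) auto
    then show ?thesis using step1 by (simp add: w_def)
  qed
  have "w 1 = 1 - L * \<gamma> * real K - L\<^sup>2 * \<gamma>\<^sup>2 * ((real K + 1) * (real K - 2) / 2) - L\<^sup>2 * \<gamma>\<^sup>2"
    using K by (simp add: w_def sum_of_nat_minus_one_greaterThan field_simps)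
  then have "\<delta> - 1 \<le> w 1" using step1 step2 by simp
  then have "(\<delta> - 1) * H 1 \<le> H 1 * w 1" using H[of 1] by (metis mult.commute mult_right_mono)
  also have "\<dots> \<le> H 1 * w 1 + (\<Sum>i=2..K. H i * w i)"
    using w_nonneg H by (auto intro!: sum_nonneg)
  also have "\<dots> = (\<Sum>i=1..K. H i * w i)"
    using K by (simp add: sum.atLeast_Suc_atMost numeral_2_eq_2)
  finally show ?thesis by (simp add: w_def)
qed

lemma sum_weighted_prefix_sums_le:
  fixes S H :: "nat \<Rightarrow> real"
  assumes S: "\<And>k. k \<in> {1..K} \<Longrightarrow> S k \<le> H k + m"
  shows "(\<Sum>k=1..K. (real k - 1) * (\<Sum>i\<in>{1..<k}. S i))
    \<le> (\<Sum>i=1..K. H i * (\<Sum>k\<in>{i<..K}. real k - 1)) + m * (\<Sum>k=1..K. (real k - 1)\<^sup>2)"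
proof -
  have "(\<Sum>k=1..K. (real k - 1) * (\<Sum>i\<in>{1..<k}. S i)) \<le> (\<Sum>k=1..K. (real k - 1) * (\<Sum>i\<in>{1..<k}. H i + m))"
    using S by (intro sum_mono mult_left_mono) auto
  also have "\<dots> = (\<Sum>k=1..K. (real k - 1) * (\<Sum>i\<in>{1..<k}. H i) + m * (real k - 1)\<^sup>2)"
    by (intro sum.cong refl) (auto simp: sum.distrib of_nat_diff power2_eq_square algebra_simps)
  also have "\<dots> = (\<Sum>i=1..K. H i * (\<Sum>k\<in>{i<..K}. real k - 1)) + m * (\<Sum>k=1..K. (real k - 1)\<^sup>2)"
    by (simp only: sum.distrib sum_distrib_left[symmetric] sum_weighted_prefix_sums)
  finally show ?thesis .
qed

text \<open>The estimate for one processor, abstracted: with \<open>a2 = \<parallel>\<nabla>F(v)\<parallel>\<^sup>2\<close>, \<open>H k\<close> is the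
  expected squared gradient at the local iterate where step \<open>k\<close> starts (so \<open>H 1 = a2\<close>), \<open>S k\<close>
  the expected squared norm of the stochastic gradient of step \<open>k\<close>, \<open>E k\<close> its expected inner
  product with \<open>\<nabla>F(v)\<close>, and \<open>X2\<close>, \<open>EX2\<close> the second moment and squared mean of the sum of these
  gradients; \<open>m\<close> bounds the minibatch variance.\<close>

lemma local_descent_inequality:
  fixes H S E :: "nat \<Rightarrow> real" and L \<gamma> \<delta> m a2 X2 EX2 :: real and K P :: nat
  assumes K: "K \<ge> 1" and P: "P \<ge> 1" and L: "L > 0" and \<gamma>: "\<gamma> > 0" and m: "m \<ge> 0"
    and step1: "1 \<ge> L\<^sup>2 * \<gamma>\<^sup>2 * (real K + 1) * (real K - 2) / 2 + L * \<gamma> * real K"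
    and step2: "1 - \<delta> \<ge> L\<^sup>2 * \<gamma>\<^sup>2"
    and H1: "H 1 = a2" and H: "\<And>k. H k \<ge> 0"
    and S: "\<And>k. k \<in> {1..K} \<Longrightarrow> S k \<le> H k + m"
    and E: "\<And>k. k \<in> {1..K} \<Longrightarrow> (a2 + H k - L\<^sup>2 * \<gamma>\<^sup>2 * ((real k - 1) * (\<Sum>i\<in>{1..<k}. S i))) / 2 \<le> E k"
    and X2: "X2 \<le> real K * (\<Sum>k=1..K. S k)"
    and EX2: "EX2 \<le> real K * (\<Sum>k=1..K. H k)"
  shows "- \<gamma> * (\<Sum>k=1..K. E k) + L * \<gamma>\<^sup>2 / (2 * real P) * (X2 + (real P - 1) * EX2)
     \<le> - \<gamma> * (real K - 1 + \<delta>) / 2 * a2 + L * \<gamma>\<^sup>2 * (real K)\<^sup>2 * m / (2 * real P)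
        + L\<^sup>2 * \<gamma>^3 * m * (real K - 1) * real K * (2 * real K - 1) / 12"
proof -
  define SH where "SH = (\<Sum>k=1..K. H k)"
  define TH where "TH = (\<Sum>i=1..K. H i * (\<Sum>k\<in>{i<..K}. real k - 1))"
  define Q2 where "Q2 = (\<Sum>k=1..K. (real k - 1)\<^sup>2)"
  have "(\<Sum>k=1..K. (a2 + H k - L\<^sup>2 * \<gamma>\<^sup>2 * ((real k - 1) * (\<Sum>i\<in>{1..<k}. S i))) / 2) \<le> (\<Sum>k=1..K. E k)"
    by (intro sum_mono E) auto
  moreover have "L\<^sup>2 * \<gamma>\<^sup>2 * (\<Sum>k=1..K. (real k - 1) * (\<Sum>i\<in>{1..<k}. S i)) \<le> L\<^sup>2 * \<gamma>\<^sup>2 * (TH + m * Q2)"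
    unfolding TH_def Q2_def using S by (intro mult_left_mono sum_weighted_prefix_sums_le) auto
  ultimately have "(real K * a2 + SH - L\<^sup>2 * \<gamma>\<^sup>2 * (TH + m * Q2)) / 2 \<le> (\<Sum>k=1..K. E k)"
    unfolding SH_def by (simp add: sum_divide_distrib[symmetric] sum.distrib sum_subtractf sum_distrib_left[symmetric])
  then have mean: "\<gamma> * ((real K * a2 + SH - L\<^sup>2 * \<gamma>\<^sup>2 * (TH + m * Q2)) / 2) \<le> \<gamma> * (\<Sum>k=1..K. E k)"
    using \<gamma> by (intro mult_left_mono) auto
  have "X2 + (real P - 1) * EX2 \<le> real K * (SH + real K * m) + (real P - 1) * (real K * SH)"
  proof -
    have "(\<Sum>k=1..K. S k) \<le> (\<Sum>k=1..K. H k + m)"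
      using S by (intro sum_mono) auto
    then have "(\<Sum>k=1..K. S k) \<le> SH + real K * m"
      by (simp add: SH_def sum.distrib)
    then have "X2 \<le> real K * (SH + real K * m)" using X2 by (meson mult_left_mono of_nat_0_le_iff order_trans)
    moreover have "(real P - 1) * EX2 \<le> (real P - 1) * (real K * SH)"
      using EX2 P unfolding SH_def by (intro mult_left_mono) auto
    ultimately show ?thesis by linarith
  qed
  then have second: "L * \<gamma>\<^sup>2 / (2 * real P) * (X2 + (real P - 1) * EX2)
      \<le> L * \<gamma>\<^sup>2 / (2 * real P) * (real K * (SH + real K * m) + (real P - 1) * (real K * SH))"
    using L by (intro mult_left_mono) auto
  have "(\<Sum>i=1..K. H i * (1 - L * \<gamma> * real K - L\<^sup>2 * \<gamma>\<^sup>2 * (\<Sum>k\<in>{i<..K}. real k - 1)))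
      = SH - L * \<gamma> * real K * SH - L\<^sup>2 * \<gamma>\<^sup>2 * TH"
    unfolding SH_def TH_def
    by (simp add: algebra_simps sum_subtractf sum_distrib_left sum_distrib_right sum.distrib)
  then have "(\<delta> - 1) * a2 \<le> SH - L * \<gamma> * real K * SH - L\<^sup>2 * \<gamma>\<^sup>2 * TH"
    using stepsize_weighted_sum_lower[where H=H, OF K H step1 step2] H1 by simp
  then have weights: "\<gamma> / 2 * ((\<delta> - 1) * a2) \<le> \<gamma> / 2 * (SH - L * \<gamma> * real K * SH - L\<^sup>2 * \<gamma>\<^sup>2 * TH)"
    using \<gamma> by (intro mult_left_mono) auto
  have Q2: "Q2 = (real K - 1) * real K * (2 * real K - 1) / 6"
    unfolding Q2_def by (rule sum_of_nat_minus_one_squared)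
  have "- \<gamma> * (\<Sum>k=1..K. E k) + L * \<gamma>\<^sup>2 / (2 * real P) * (X2 + (real P - 1) * EX2)
      \<le> - \<gamma> * ((real K * a2 + SH - L\<^sup>2 * \<gamma>\<^sup>2 * (TH + m * Q2)) / 2)
        + L * \<gamma>\<^sup>2 / (2 * real P) * (real K * (SH + real K * m) + (real P - 1) * (real K * SH))"
    using mean second by linarith
  also have "\<dots> = - \<gamma> / 2 * (real K * a2) - \<gamma> / 2 * (SH - L * \<gamma> * real K * SH - L\<^sup>2 * \<gamma>\<^sup>2 * TH)
      + \<gamma> / 2 * L\<^sup>2 * \<gamma>\<^sup>2 * m * Q2 + L * \<gamma>\<^sup>2 * (real K)\<^sup>2 * m / (2 * real P)"
    using P by (simp add: field_simps power2_eq_square)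
  also have "\<dots> \<le> - \<gamma> / 2 * (real K * a2) - \<gamma> / 2 * ((\<delta> - 1) * a2)
      + \<gamma> / 2 * L\<^sup>2 * \<gamma>\<^sup>2 * m * Q2 + L * \<gamma>\<^sup>2 * (real K)\<^sup>2 * m / (2 * real P)"
    using weights by linarith
  also have "\<dots> = - \<gamma> * (real K - 1 + \<delta>) / 2 * a2 + L * \<gamma>\<^sup>2 * (real K)\<^sup>2 * m / (2 * real P)
      + L\<^sup>2 * \<gamma>^3 * m * (real K - 1) * real K * (2 * real K - 1) / 12"
    unfolding Q2 by (simp add: field_simps power2_eq_square power3_eq_cube)
  finally show ?thesis .
qed

lemma noise_bound_rescaled:
  fixes L g M e S :: real and b K P :: nat
  assumes "b \<ge> 1" "P \<ge> 1" "e > 0" "S > 0"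
  shows "2 / (e * S) * (L * g\<^sup>2 * (real K)\<^sup>2 * (M / real b) / (2 * real P)
        + L\<^sup>2 * g^3 * (M / real b) * (real K - 1) * real K * (2 * real K - 1) / 12)
     = L * real K * g\<^sup>2 * M / (real b * e * S) * (real K / real P + L * (2 * real K - 1) * (real K - 1) * g / 6)"
  using assms by (simp add: field_simps power2_eq_square power3_eq_cube)

lemma averaged_descent_terms_eq:
  fixes A Q :: "nat \<Rightarrow> real"
  assumes "P \<ge> 1"
  shows "- (g / real P) * (\<Sum>j=1..P. A j) + L / 2 * ((g / real P)\<^sup>2 * (\<Sum>j=1..P. Q j))
    = (1 / real P) * (\<Sum>j=1..P. - g * A j + L * g\<^sup>2 / (2 * real P) * Q j)"
proof -
  have sum: "(\<Sum>j=1..P. - g * A j + L * g\<^sup>2 / (2 * real P) * Q j)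
      = - g * (\<Sum>j=1..P. A j) + L * g\<^sup>2 / (2 * real P) * (\<Sum>j=1..P. Q j)"
    by (simp only: sum.distrib sum_distrib_left[symmetric] mult_minus_left sum_negf)
  show ?thesis unfolding sum using assms by (simp add: field_simps power2_eq_square)
qed

lemma tendsto_bounded_divide_at_top:
  fixes x S :: "nat \<Rightarrow> real"
  assumes S: "filterlim S at_top sequentially" and x: "\<And>N. 0 \<le> x N" "\<And>N. x N \<le> C"
  shows "(\<lambda>N. x N / S N) \<longlonglongrightarrow> 0"
proof (rule tendsto_sandwich)
  have pos: "\<forall>\<^sub>F N in sequentially. S N > 0"
    using S by (simp add: filterlim_at_top_dense)
  show "\<forall>\<^sub>F N in sequentially. 0 \<le> x N / S N"
    using pos by eventually_elim (simp add: x)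
  show "\<forall>\<^sub>F N in sequentially. x N / S N \<le> C * inverse (S N)"
    using pos by eventually_elim (simp add: x divide_right_mono field_simps)
  show "(\<lambda>N. C * inverse (S N)) \<longlonglongrightarrow> 0"
    using tendsto_mult_right_zero[OF tendsto_inverse_0_at_top[OF S]] by simp
qed simp

lemma weighted_bound_tendsto_zero:
  fixes \<gamma> :: "nat \<Rightarrow> real" and B :: "nat \<Rightarrow> nat" and L M \<delta> D0 :: real and K P :: nat
  assumes \<gamma>: "\<And>j. j \<ge> 1 \<Longrightarrow> \<gamma> j > 0" and b: "\<And>j. j \<ge> 1 \<Longrightarrow> B j \<ge> 1"
    and K: "K \<ge> 1" and P: "P \<ge> 1" and L: "L > 0" and M: "M \<ge> 0" and \<delta>: "\<delta> > 0" and D0: "D0 \<ge> 0"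
    and div: "filterlim (\<lambda>N. \<Sum>j=1..N. \<gamma> j) at_top sequentially"
    and s1: "summable (\<lambda>j. real K * (\<gamma> (Suc j))\<^sup>2 / (real P * real (B (Suc j))))"
    and s2: "summable (\<lambda>j. (\<gamma> (Suc j)) ^ 3)"
  shows "(\<lambda>N. 2 * D0 / ((real K - 1 + \<delta>) * (\<Sum>i=1..N. \<gamma> i))
       + (\<Sum>j=1..N. L * real K * (\<gamma> j)\<^sup>2 * M / (real (B j) * (real K - 1 + \<delta>) * (\<Sum>i=1..N. \<gamma> i))
           * (real K / real P + L * (2 * real K - 1) * (real K - 1) * \<gamma> j / 6))) \<longlonglongrightarrow> 0"
proof -
  define e where "e = real K - 1 + \<delta>"
  define u where "u j = real K * (\<gamma> j)\<^sup>2 / (real P * real (B j))" for j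
  define T where "T j = L * real K * (\<gamma> j)\<^sup>2 * M / (real (B j) * e)
    * (real K / real P + L * (2 * real K - 1) * (real K - 1) * \<gamma> j / 6)" for j
  define C1 where "C1 = L * M * real K / e"
  define C2 where "C2 = L\<^sup>2 * M * real K * (2 * real K - 1) * (real K - 1) / (6 * e)"
  have e: "e > 0" using K \<delta> by (simp add: e_def)
  have C2: "C2 \<ge> 0" unfolding C2_def using L M e K by (intro divide_nonneg_nonneg mult_nonneg_nonneg) auto
  have T: "0 \<le> T j \<and> T j \<le> C1 * u j + C2 * (\<gamma> j)^3" if j: "j \<ge> 1" for j
  proof -
    have bj: "real (B j) \<ge> 1" using b[OF j] by simp
    have "T j = C1 * u j + C2 * ((\<gamma> j)^3 / real (B j))"
      unfolding T_def C1_def C2_def u_def using e bj P by (simp add: field_simps power2_eq_square power3_eq_cube)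
    moreover have "C2 * ((\<gamma> j)^3 / real (B j)) \<le> C2 * (\<gamma> j)^3"
      using bj \<gamma>[OF j] C2 by (intro mult_left_mono) (simp_all add: divide_le_eq)
    moreover have "0 \<le> T j"
      unfolding T_def using L M e \<gamma>[OF j] bj P K by (intro mult_nonneg_nonneg divide_nonneg_nonneg add_nonneg_nonneg) auto
    ultimately show ?thesis by linarith
  qed
  have bounded: "(\<Sum>j=1..N. T j) \<le> C1 * (\<Sum>m. u (Suc m)) + C2 * (\<Sum>m. (\<gamma> (Suc m))^3)" for N
  proof -
    have "(\<Sum>j=1..N. T j) \<le> (\<Sum>j=1..N. C1 * u j + C2 * (\<gamma> j)^3)" using T by (intro sum_mono) auto
    also have "\<dots> = C1 * (\<Sum>m<N. u (Suc m)) + C2 * (\<Sum>m<N. (\<gamma> (Suc m))^3)"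
      by (simp add: sum.distrib sum_distrib_left sum.atLeast1_atMost_eq)
    also have "\<dots> \<le> C1 * (\<Sum>m. u (Suc m)) + C2 * (\<Sum>m. (\<gamma> (Suc m))^3)"
      using s1 s2 \<gamma> L M e C2 unfolding u_def C1_def
      by (intro add_mono mult_left_mono sum_le_suminf) (auto intro: less_imp_le)
    finally show ?thesis .
  qed
  have "(\<lambda>N. (2 * D0 / e + (\<Sum>j=1..N. T j)) / (\<Sum>i=1..N. \<gamma> i)) \<longlonglongrightarrow> 0"
  proof (rule tendsto_bounded_divide_at_top[OF div])
    show "0 \<le> 2 * D0 / e + (\<Sum>j=1..N. T j)" for N
      using D0 e T by (intro add_nonneg_nonneg sum_nonneg) auto
    show "2 * D0 / e + (\<Sum>j=1..N. T j) \<le> 2 * D0 / e + (C1 * (\<Sum>m. u (Suc m)) + C2 * (\<Sum>m. (\<gamma> (Suc m))^3))" for N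
      using bounded by (rule add_left_mono)
  qed
  moreover have "(2 * D0 / e + (\<Sum>j=1..N. T j)) / (\<Sum>i=1..N. \<gamma> i)
      = 2 * D0 / (e * (\<Sum>i=1..N. \<gamma> i)) + (\<Sum>j=1..N. L * real K * (\<gamma> j)\<^sup>2 * M / (real (B j) * e * (\<Sum>i=1..N. \<gamma> i))
           * (real K / real P + L * (2 * real K - 1) * (real K - 1) * \<gamma> j / 6))" for N
    unfolding T_def by (simp add: add_divide_distrib sum_divide_distrib)
  ultimately show ?thesis by (simp add: e_def)
qed

section \<open>The K-AVG algorithm\<close>

definition step_samples :: "nat \<Rightarrow> nat \<Rightarrow> nat \<Rightarrow> sidx set" where
  "step_samples n j k = {(n', j', k', s). n' = n \<and> j' = j \<and> k' = k}"

definition processor_samples :: "nat \<Rightarrow> nat \<Rightarrow> nat \<Rightarrow> sidx set" where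
  "processor_samples n j k = {(n', j', k', s). n' = n \<and> j' = j \<and> k' \<le> k}"

definition samples_until :: "nat \<Rightarrow> sidx set" where
  "samples_until m = {(n, j, k, s). n \<le> m}"

locale kavg = iid_samples D for D :: "'x measure" +
  fixes F :: "'a::euclidean_space \<Rightarrow> real" and gradF :: "'a \<Rightarrow> 'a" and L M :: real
    and G :: "'a \<Rightarrow> 'x \<Rightarrow> 'a" and \<gamma> :: "nat \<Rightarrow> real" and B :: "nat \<Rightarrow> nat"
  assumes grad: "\<And>w. GDERIV F w :> gradF w"
    and L_pos: "L > 0"
    and lip: "\<And>w w'. norm (gradF w - gradF w') \<le> L * norm (w - w')"
    and G_meas: "(\<lambda>(w, x). G w x) \<in> borel_measurable (borel \<Otimes>\<^sub>M D)"
    and G_int: "\<And>w. integrable D (G w)"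
    and G_int2: "\<And>w. integrable D (\<lambda>x. (norm (G w x))\<^sup>2)"
    and unbiased: "\<And>w. (\<integral>x. G w x \<partial>D) = gradF w"
    and variance: "\<And>w. (\<integral>x. (norm (G w x))\<^sup>2 \<partial>D) - (norm (\<integral>x. G w x \<partial>D))\<^sup>2 \<le> M"
    and M_nonneg: "M \<ge> 0"
begin

interpretation O: prob_space "\<Omega> :: (sidx \<Rightarrow> 'x) measure" by (rule prob_space_\<Omega>)

definition minibatch_grad :: "'a \<Rightarrow> (sidx \<Rightarrow> 'x) \<Rightarrow> nat \<Rightarrow> nat \<Rightarrow> nat \<Rightarrow> 'a" where
  "minibatch_grad v \<omega> n j k = (1 / real (B n)) *\<^sub>R (\<Sum>s=1..B n. G v (\<omega> (n, j, k, s)))"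

abbreviation local_iterate :: "(sidx \<Rightarrow> 'x) \<Rightarrow> nat \<Rightarrow> nat \<Rightarrow> 'a \<Rightarrow> nat \<Rightarrow> 'a" where
  "local_iterate \<omega> n j v k \<equiv> kavg_local G \<gamma> B \<omega> n j v k"

lemma local_iterate_Suc:
  "local_iterate \<omega> n j v (Suc k) = local_iterate \<omega> n j v k - \<gamma> n *\<^sub>R minibatch_grad (local_iterate \<omega> n j v k) \<omega> n j (Suc k)"
  by (simp add: minibatch_grad_def)

lemma measurable_gradF[measurable]: "gradF \<in> borel_measurable borel"
proof (rule borel_measurable_continuous_onI)
  show "continuous_on UNIV gradF"
    using lip L_pos by (intro lipschitz_on_continuous_on[of L] lipschitz_onI) (auto simp: dist_norm)
qed

lemma measurable_F[measurable]: "F \<in> borel_measurable borel"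
  by (rule borel_measurable_GDERIV[OF grad])

lemma measurable_minibatch_grad:
  assumes u: "u \<in> borel_measurable \<Omega>"
  shows "(\<lambda>\<omega>. minibatch_grad (u \<omega>) \<omega> n j k) \<in> borel_measurable \<Omega>"
proof -
  have "(\<lambda>\<omega>. G (u \<omega>) (\<omega> i)) \<in> borel_measurable \<Omega>" for i
    using measurable_compose[OF _ G_meas, of "\<lambda>\<omega>. (u \<omega>, \<omega> i)"] u by simp
  then show ?thesis unfolding minibatch_grad_def by measurable
qed

lemma measurable_local_iterate:
  assumes "u \<in> borel_measurable \<Omega>"
  shows "(\<lambda>\<omega>. local_iterate \<omega> n j (u \<omega>) k) \<in> borel_measurable \<Omega>"
proof (induction k)
  case (Suc k)
  then show ?case unfolding local_iterate_Suc
    by (intro borel_measurable_diff borel_measurable_scaleR borel_measurable_const measurable_minibatch_grad)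
qed (use assms in simp)

lemma measurable_kavg_seq[measurable]: "(\<lambda>\<omega>. kavg_seq G P K \<gamma> B w1 \<omega> m) \<in> borel_measurable \<Omega>"
proof (induction m)
  case (Suc m)
  then show ?case unfolding kavg_seq.simps
    by (intro borel_measurable_scaleR borel_measurable_sum borel_measurable_const measurable_local_iterate)
qed simp

lemma measurable_local_iterate_const[measurable]: "(\<lambda>\<omega>. local_iterate \<omega> n j v k) \<in> borel_measurable \<Omega>"
  using measurable_local_iterate[of "\<lambda>_. v"] by simp

lemma depends_only_on_minibatch_grad: "depends_only_on (step_samples n j k) (\<lambda>\<omega>. minibatch_grad v \<omega> n j k)"
  unfolding depends_only_on_def minibatch_grad_def step_samples_def by auto

lemma depends_only_on_local_iterate:
  assumes "depends_only_on A u"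
  shows "depends_only_on (A \<union> processor_samples n j k) (\<lambda>\<omega>. local_iterate \<omega> n j (u \<omega>) k)"
proof (induction k)
  case 0
  show ?case using assms by (simp add: depends_only_on_mono)
next
  case (Suc k)
  show ?case unfolding depends_only_on_def
  proof (intro allI impI)
    fix \<omega> \<omega>' :: "sidx \<Rightarrow> 'x" assume eq: "\<forall>i\<in>A \<union> processor_samples n j (Suc k). \<omega> i = \<omega>' i"
    have "A \<union> processor_samples n j k \<subseteq> A \<union> processor_samples n j (Suc k)"
      by (auto simp: processor_samples_def)
    then have "local_iterate \<omega> n j (u \<omega>) k = local_iterate \<omega>' n j (u \<omega>') k"
      using Suc eq unfolding depends_only_on_def by blast
    moreover have "\<omega> (n, j, Suc k, s) = \<omega>' (n, j, Suc k, s)" for s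
      using eq by (auto simp: processor_samples_def)
    ultimately show "local_iterate \<omega> n j (u \<omega>) (Suc k) = local_iterate \<omega>' n j (u \<omega>') (Suc k)"
      by simp
  qed
qed

lemma depends_only_on_local_iterate_const:
  "depends_only_on (processor_samples n j k) (\<lambda>\<omega>. local_iterate \<omega> n j v k)"
  using depends_only_on_local_iterate[where u="\<lambda>_. v", OF depends_only_on_const[of "{}"]] by simp

lemma depends_only_on_kavg_seq: "depends_only_on (samples_until m) (\<lambda>\<omega>. kavg_seq G P K \<gamma> B w1 \<omega> m)"
proof (induction m)
  case 0
  show ?case by (simp add: depends_only_on_const)
next
  case (Suc m)
  have "depends_only_on (samples_until (Suc m))
      (\<lambda>\<omega>. local_iterate \<omega> (Suc m) j (kavg_seq G P K \<gamma> B w1 \<omega> m) K)" for j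
    by (rule depends_only_on_mono[OF depends_only_on_local_iterate[OF Suc]])
      (auto simp: samples_until_def processor_samples_def)
  then show ?case
    by (simp del: kavg_local.simps) (intro depends_only_on_comp[where h="\<lambda>x. _ *\<^sub>R x"] depends_only_on_sum)
qed

lemma
  assumes "B n \<ge> 1"
  shows integral_minibatch_grad: "(\<integral>\<omega>. minibatch_grad v \<omega> n j k \<partial>\<Omega>) = gradF v"
    and integrable_minibatch_grad_squared: "integrable \<Omega> (\<lambda>\<omega>. (norm (minibatch_grad v \<omega> n j k))\<^sup>2)"
    and integral_minibatch_grad_squared:
      "(\<integral>\<omega>. (norm (minibatch_grad v \<omega> n j k))\<^sup>2 \<partial>\<Omega>) \<le> (norm (gradF v))\<^sup>2 + M / real (B n)"
proof -
  define Y where "Y s \<omega> = G v (\<omega> (n, j, k, s))" for s and \<omega> :: "sidx \<Rightarrow> 'x"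
  define b where "b = B n"
  have b: "real b \<ge> 1" using assms by (simp add: b_def)
  have mb: "minibatch_grad v \<omega> n j k = (1 / real b) *\<^sub>R (\<Sum>s=1..b. Y s \<omega>)" for \<omega>
    by (simp add: minibatch_grad_def Y_def b_def)
  have Y: "integrable \<Omega> (Y s)" "integral\<^sup>L \<Omega> (Y s) = gradF v" for s
    using integrable_coordinate[OF G_int] integral_coordinate[OF G_int] unbiased
    by (auto simp: Y_def[abs_def])
  have Y2: "integrable \<Omega> (\<lambda>\<omega>. (norm (Y s \<omega>))\<^sup>2)" "(\<integral>\<omega>. (norm (Y s \<omega>))\<^sup>2 \<partial>\<Omega>) \<le> (norm (gradF v))\<^sup>2 + M" for s
  proof -
    have "(\<integral>x. (norm (G v x))\<^sup>2 \<partial>D) \<le> (norm (gradF v))\<^sup>2 + M"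
      using variance[of v] unbiased[of v] by simp
    then show "integrable \<Omega> (\<lambda>\<omega>. (norm (Y s \<omega>))\<^sup>2)" "(\<integral>\<omega>. (norm (Y s \<omega>))\<^sup>2 \<partial>\<Omega>) \<le> (norm (gradF v))\<^sup>2 + M"
      using integrable_coordinate[OF G_int2] integral_coordinate[OF G_int2[of v], of "(n, j, k, s)"]
      by (auto simp: Y_def)
  qed
  have dep: "depends_only_on {(n, j, k, s)} (Y s)" for s
    unfolding depends_only_on_def Y_def by auto
  note sum = integral_norm_sum_independent[of "{1..b}" Y "\<lambda>s. {(n, j, k, s)}", OF _ Y(1) Y2(1) dep]
  show "(\<integral>\<omega>. minibatch_grad v \<omega> n j k \<partial>\<Omega>) = gradF v"
    unfolding mb using Y b by (simp add: integral_sum sum_constant_scaleR)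
  have sq: "(norm (minibatch_grad v \<omega> n j k))\<^sup>2 = (norm (\<Sum>s=1..b. Y s \<omega>))\<^sup>2 / (real b)\<^sup>2" for \<omega>
    unfolding mb by (simp add: power_divide)
  show "integrable \<Omega> (\<lambda>\<omega>. (norm (minibatch_grad v \<omega> n j k))\<^sup>2)"
    unfolding sq using sum(1) by auto
  have "(\<integral>\<omega>. (norm (\<Sum>s=1..b. Y s \<omega>))\<^sup>2 \<partial>\<Omega>)
      = (real b * norm (gradF v))\<^sup>2 + (\<Sum>s=1..b. (\<integral>\<omega>. (norm (Y s \<omega>))\<^sup>2 \<partial>\<Omega>) - (norm (gradF v))\<^sup>2)"
    using sum(2) by (simp add: Y(2) sum_constant_scaleR)
  also have "\<dots> \<le> (real b * norm (gradF v))\<^sup>2 + (\<Sum>s=1..b. M)"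
    using Y2(2) by (intro add_left_mono sum_mono) (auto simp: algebra_simps)
  finally have "(\<integral>\<omega>. (norm (\<Sum>s=1..b. Y s \<omega>))\<^sup>2 \<partial>\<Omega>) / (real b)\<^sup>2 \<le> ((real b * norm (gradF v))\<^sup>2 + real b * M) / (real b)\<^sup>2"
    by (simp add: divide_right_mono)
  also have "\<dots> = (norm (gradF v))\<^sup>2 + M / real b"
    using b by (simp add: field_simps power2_eq_square)
  finally show "(\<integral>\<omega>. (norm (minibatch_grad v \<omega> n j k))\<^sup>2 \<partial>\<Omega>) \<le> (norm (gradF v))\<^sup>2 + M / real (B n)"
    unfolding sq by (simp add: b_def)
qed

lemma
  fixes u :: "(sidx \<Rightarrow> 'x) \<Rightarrow> 'a"
  assumes b: "B n \<ge> 1" and u: "u \<in> borel_measurable \<Omega>"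
    and du: "depends_only_on (- step_samples n j k) u"
    and iu: "integrable \<Omega> (\<lambda>\<omega>. (norm (gradF (u \<omega>)))\<^sup>2)"
  shows integrable_minibatch_grad_at_squared:
      "integrable \<Omega> (\<lambda>\<omega>. (norm (minibatch_grad (u \<omega>) \<omega> n j k))\<^sup>2)"
    and integral_minibatch_grad_at_squared:
      "(\<integral>\<omega>. (norm (minibatch_grad (u \<omega>) \<omega> n j k))\<^sup>2 \<partial>\<Omega>) \<le> (\<integral>\<omega>. (norm (gradF (u \<omega>)))\<^sup>2 \<partial>\<Omega>) + M / real (B n)"
    and integrable_minibatch_grad_at: "integrable \<Omega> (\<lambda>\<omega>. minibatch_grad (u \<omega>) \<omega> n j k)"
    and integral_minibatch_grad_at: "(\<integral>\<omega>. minibatch_grad (u \<omega>) \<omega> n j k \<partial>\<Omega>) = (\<integral>\<omega>. gradF (u \<omega>) \<partial>\<Omega>)"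
proof -
  have dg: "depends_only_on (- (- step_samples n j k)) (\<lambda>\<omega>. minibatch_grad v \<omega> n j k)" for v
    using depends_only_on_minibatch_grad by simp
  have [measurable]: "(\<lambda>\<omega>. minibatch_grad (u \<omega>) \<omega> n j k) \<in> borel_measurable \<Omega>"
    by (rule measurable_minibatch_grad[OF u])
  have "(\<integral>\<^sup>+\<omega>. ennreal ((norm (minibatch_grad (u \<omega>) \<omega> n j k))\<^sup>2) \<partial>\<Omega>)
      = (\<integral>\<^sup>+\<omega>. \<integral>\<^sup>+\<omega>'. ennreal ((norm (minibatch_grad (u \<omega>) \<omega>' n j k))\<^sup>2) \<partial>\<Omega> \<partial>\<Omega>)"
    by (rule nn_integral_freeze[where \<psi>="\<lambda>v \<omega>. ennreal ((norm (minibatch_grad v \<omega> n j k))\<^sup>2)", OF _ du])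
      (use depends_only_on_comp[OF depends_only_on_minibatch_grad] in auto)
  also have "\<dots> \<le> (\<integral>\<^sup>+\<omega>. ennreal ((norm (gradF (u \<omega>)))\<^sup>2 + M / real (B n)) \<partial>\<Omega>)"
  proof (rule nn_integral_mono)
    fix \<omega>
    have "(\<integral>\<^sup>+\<omega>'. ennreal ((norm (minibatch_grad (u \<omega>) \<omega>' n j k))\<^sup>2) \<partial>\<Omega>)
        = ennreal (\<integral>\<omega>'. (norm (minibatch_grad (u \<omega>) \<omega>' n j k))\<^sup>2 \<partial>\<Omega>)"
      using integrable_minibatch_grad_squared[OF b] by (intro nn_integral_eq_integral) auto
    also have "\<dots> \<le> ennreal ((norm (gradF (u \<omega>)))\<^sup>2 + M / real (B n))"
      using integral_minibatch_grad_squared[OF b] by (intro ennreal_leI)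
    finally show "(\<integral>\<^sup>+\<omega>'. ennreal ((norm (minibatch_grad (u \<omega>) \<omega>' n j k))\<^sup>2) \<partial>\<Omega>)
        \<le> ennreal ((norm (gradF (u \<omega>)))\<^sup>2 + M / real (B n))" .
  qed
  also have "\<dots> = ennreal ((\<integral>\<omega>. (norm (gradF (u \<omega>)))\<^sup>2 \<partial>\<Omega>) + M / real (B n))"
    using iu M_nonneg by (subst nn_integral_eq_integral) (auto simp: O.prob_space)
  finally have le: "(\<integral>\<^sup>+\<omega>. ennreal ((norm (minibatch_grad (u \<omega>) \<omega> n j k))\<^sup>2) \<partial>\<Omega>)
      \<le> ennreal ((\<integral>\<omega>. (norm (gradF (u \<omega>)))\<^sup>2 \<partial>\<Omega>) + M / real (B n))" .
  have c: "0 \<le> (\<integral>\<omega>. (norm (gradF (u \<omega>)))\<^sup>2 \<partial>\<Omega>) + M / real (B n)"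
    using M_nonneg by (intro add_nonneg_nonneg integral_nonneg) auto
  show i2: "integrable \<Omega> (\<lambda>\<omega>. (norm (minibatch_grad (u \<omega>) \<omega> n j k))\<^sup>2)"
    by (rule integrable_of_nn_integral_le[OF _ _ c le]) auto
  show "(\<integral>\<omega>. (norm (minibatch_grad (u \<omega>) \<omega> n j k))\<^sup>2 \<partial>\<Omega>) \<le> (\<integral>\<omega>. (norm (gradF (u \<omega>)))\<^sup>2 \<partial>\<Omega>) + M / real (B n)"
    by (rule integral_le_of_nn_integral_le[OF _ _ c le]) auto
  show i1: "integrable \<Omega> (\<lambda>\<omega>. minibatch_grad (u \<omega>) \<omega> n j k)"
    by (rule O.square_norm_integrable_imp_integrable[OF _ i2]) measurable
  have "(\<integral>\<omega>. minibatch_grad (u \<omega>) \<omega> n j k \<partial>\<Omega>) = (\<integral>\<omega>. \<integral>\<omega>'. minibatch_grad (u \<omega>) \<omega>' n j k \<partial>\<Omega> \<partial>\<Omega>)"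
    by (rule integral_freeze[where \<psi>="\<lambda>v \<omega>. minibatch_grad v \<omega> n j k", OF i1 du dg])
  then show "(\<integral>\<omega>. minibatch_grad (u \<omega>) \<omega> n j k \<partial>\<Omega>) = (\<integral>\<omega>. gradF (u \<omega>) \<partial>\<Omega>)"
    using integral_minibatch_grad[OF b] by simp
qed

lemma integrable_gradF_squared:
  fixes u :: "(sidx \<Rightarrow> 'x) \<Rightarrow> 'a"
  assumes [measurable]: "u \<in> borel_measurable \<Omega>" and "integrable \<Omega> (\<lambda>\<omega>. (norm (u \<omega> - v))\<^sup>2)"
  shows "integrable \<Omega> (\<lambda>\<omega>. (norm (gradF (u \<omega>)))\<^sup>2)"
proof (rule Bochner_Integration.integrable_bound)
  show "integrable \<Omega> (\<lambda>\<omega>. 2 * (norm (gradF v))\<^sup>2 + 2 * L\<^sup>2 * (norm (u \<omega> - v))\<^sup>2)"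
    using assms by auto
  have "(norm (gradF w))\<^sup>2 \<le> 2 * (norm (gradF v))\<^sup>2 + 2 * L\<^sup>2 * (norm (w - v))\<^sup>2" for w
  proof -
    have "(norm (gradF w))\<^sup>2 \<le> 2 * (norm (gradF v))\<^sup>2 + 2 * (norm (gradF w - gradF v))\<^sup>2"
      using norm_add_squared_le[of "gradF v" "gradF w - gradF v"] by simp
    also have "(norm (gradF w - gradF v))\<^sup>2 \<le> (L * norm (w - v))\<^sup>2"
      using lip[of w v] by (intro power_mono) auto
    finally show ?thesis by (simp add: power_mult_distrib)
  qed
  then show "AE \<omega> in \<Omega>. norm ((norm (gradF (u \<omega>)))\<^sup>2) \<le> norm (2 * (norm (gradF v))\<^sup>2 + 2 * L\<^sup>2 * (norm (u \<omega> - v))\<^sup>2)"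
    by (intro AE_I2) (smt (verit) real_norm_def zero_le_power2)
qed measurable

lemma depends_only_on_local_iterate_before_step:
  "depends_only_on (- step_samples n j (Suc k)) (\<lambda>\<omega>. local_iterate \<omega> n j v k)"
  by (rule depends_only_on_mono[OF depends_only_on_local_iterate_const])
    (auto simp: processor_samples_def step_samples_def)

lemma integrable_local_iterate_squared:
  assumes b: "B n \<ge> 1"
  shows "integrable \<Omega> (\<lambda>\<omega>. (norm (local_iterate \<omega> n j v k - v))\<^sup>2)"
proof (induction k)
  case (Suc k)
  let ?g = "\<lambda>\<omega>. minibatch_grad (local_iterate \<omega> n j v k) \<omega> n j (Suc k)"
  have "integrable \<Omega> (\<lambda>\<omega>. (norm (?g \<omega>))\<^sup>2)"
    using Suc by (intro integrable_minibatch_grad_at_squared[OF b _ depends_only_on_local_iterate_before_step]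
        integrable_gradF_squared) auto
  show ?case
  proof (rule Bochner_Integration.integrable_bound)
    show "integrable \<Omega> (\<lambda>\<omega>. 2 * (norm (local_iterate \<omega> n j v k - v))\<^sup>2 + 2 * (norm (\<gamma> n *\<^sub>R ?g \<omega>))\<^sup>2)"
      using Suc \<open>integrable \<Omega> (\<lambda>\<omega>. (norm (?g \<omega>))\<^sup>2)\<close> by (auto simp: power_mult_distrib)
    show "AE \<omega> in \<Omega>. norm ((norm (local_iterate \<omega> n j v (Suc k) - v))\<^sup>2)
        \<le> norm (2 * (norm (local_iterate \<omega> n j v k - v))\<^sup>2 + 2 * (norm (\<gamma> n *\<^sub>R ?g \<omega>))\<^sup>2)"
      using norm_add_squared_le[of "local_iterate _ n j v k - v" "- \<gamma> n *\<^sub>R ?g _"]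
      by (intro AE_I2) (simp add: local_iterate_Suc algebra_simps del: kavg_local.simps)
  qed (use measurable_local_iterate_const in measurable)
qed simp

definition local_grad :: "(sidx \<Rightarrow> 'x) \<Rightarrow> nat \<Rightarrow> nat \<Rightarrow> 'a \<Rightarrow> nat \<Rightarrow> 'a" where
  "local_grad \<omega> n j v k = minibatch_grad (local_iterate \<omega> n j v (k - 1)) \<omega> n j k"

lemma local_iterate_minus: "local_iterate \<omega> n j v k - v = - \<gamma> n *\<^sub>R (\<Sum>i=1..k. local_grad \<omega> n j v i)"
proof (induction k)
  case (Suc k)
  have "local_iterate \<omega> n j v (Suc k) - v = (local_iterate \<omega> n j v k - v) - \<gamma> n *\<^sub>R local_grad \<omega> n j v (Suc k)"
    by (simp only: local_iterate_Suc local_grad_def) simp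
  then show ?case using Suc by (simp add: scaleR_right_distrib)
qed simp

lemma measurable_local_grad[measurable]: "(\<lambda>\<omega>. local_grad \<omega> n j v k) \<in> borel_measurable \<Omega>"
  unfolding local_grad_def by (rule measurable_minibatch_grad[OF measurable_local_iterate_const])

lemma depends_only_on_local_grad: "depends_only_on (processor_samples n j k) (\<lambda>\<omega>. local_grad \<omega> n j v k)"
  unfolding depends_only_on_def
proof (intro allI impI)
  fix \<omega> \<omega>' :: "sidx \<Rightarrow> 'x" assume eq: "\<forall>i\<in>processor_samples n j k. \<omega> i = \<omega>' i"
  have "processor_samples n j (k - 1) \<subseteq> processor_samples n j k" by (auto simp: processor_samples_def)
  then have "local_iterate \<omega> n j v (k - 1) = local_iterate \<omega>' n j v (k - 1)"
    using depends_only_on_local_iterate_const[of n j "k - 1" v] eq unfolding depends_only_on_def by blast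
  moreover have "\<omega> (n, j, k, s) = \<omega>' (n, j, k, s)" for s using eq by (auto simp: processor_samples_def)
  ultimately show "local_grad \<omega> n j v k = local_grad \<omega>' n j v k"
    unfolding local_grad_def minibatch_grad_def by simp
qed

lemma
  assumes b: "B n \<ge> 1" and k: "k \<ge> 1"
  shows integrable_local_grad: "integrable \<Omega> (\<lambda>\<omega>. local_grad \<omega> n j v k)"
    and integral_local_grad: "(\<integral>\<omega>. local_grad \<omega> n j v k \<partial>\<Omega>) = (\<integral>\<omega>. gradF (local_iterate \<omega> n j v (k - 1)) \<partial>\<Omega>)"
    and integrable_local_grad_squared: "integrable \<Omega> (\<lambda>\<omega>. (norm (local_grad \<omega> n j v k))\<^sup>2)"
    and integral_local_grad_squared: "(\<integral>\<omega>. (norm (local_grad \<omega> n j v k))\<^sup>2 \<partial>\<Omega>)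
      \<le> (\<integral>\<omega>. (norm (gradF (local_iterate \<omega> n j v (k - 1))))\<^sup>2 \<partial>\<Omega>) + M / real (B n)"
    and integrable_gradF_local_iterate: "integrable \<Omega> (\<lambda>\<omega>. gradF (local_iterate \<omega> n j v (k - 1)))"
    and integrable_gradF_local_iterate_squared:
      "integrable \<Omega> (\<lambda>\<omega>. (norm (gradF (local_iterate \<omega> n j v (k - 1))))\<^sup>2)"
proof -
  have m: "(\<lambda>\<omega>. local_iterate \<omega> n j v (k - 1)) \<in> borel_measurable \<Omega>"
    by (rule measurable_local_iterate_const)
  show i: "integrable \<Omega> (\<lambda>\<omega>. (norm (gradF (local_iterate \<omega> n j v (k - 1))))\<^sup>2)"
    by (rule integrable_gradF_squared[OF m integrable_local_iterate_squared[OF b]])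
  show "integrable \<Omega> (\<lambda>\<omega>. gradF (local_iterate \<omega> n j v (k - 1)))"
    by (rule O.square_norm_integrable_imp_integrable[OF measurable_compose[OF m measurable_gradF] i])
  have d: "depends_only_on (- step_samples n j k) (\<lambda>\<omega>. local_iterate \<omega> n j v (k - 1))"
    using depends_only_on_local_iterate_before_step[of n j "k - 1" v] k by simp
  show "integrable \<Omega> (\<lambda>\<omega>. local_grad \<omega> n j v k)"
    unfolding local_grad_def by (rule integrable_minibatch_grad_at[OF b m d i])
  show "(\<integral>\<omega>. local_grad \<omega> n j v k \<partial>\<Omega>) = (\<integral>\<omega>. gradF (local_iterate \<omega> n j v (k - 1)) \<partial>\<Omega>)"
    unfolding local_grad_def by (rule integral_minibatch_grad_at[OF b m d i])
  show "integrable \<Omega> (\<lambda>\<omega>. (norm (local_grad \<omega> n j v k))\<^sup>2)"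
    unfolding local_grad_def by (rule integrable_minibatch_grad_at_squared[OF b m d i])
  show "(\<integral>\<omega>. (norm (local_grad \<omega> n j v k))\<^sup>2 \<partial>\<Omega>)
      \<le> (\<integral>\<omega>. (norm (gradF (local_iterate \<omega> n j v (k - 1))))\<^sup>2 \<partial>\<Omega>) + M / real (B n)"
    unfolding local_grad_def by (rule integral_minibatch_grad_at_squared[OF b m d i])
qed

definition grad_sum :: "(sidx \<Rightarrow> 'x) \<Rightarrow> nat \<Rightarrow> nat \<Rightarrow> 'a \<Rightarrow> nat \<Rightarrow> 'a" where
  "grad_sum \<omega> n j v K = (\<Sum>k=1..K. local_grad \<omega> n j v k)"

lemma local_iterate_grad_sum: "local_iterate \<omega> n j v K = v - \<gamma> n *\<^sub>R grad_sum \<omega> n j v K"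
  using local_iterate_minus[of \<omega> n j v K] by (simp add: grad_sum_def algebra_simps)

lemma measurable_grad_sum[measurable]: "(\<lambda>\<omega>. grad_sum \<omega> n j v K) \<in> borel_measurable \<Omega>"
  unfolding grad_sum_def by measurable

lemma depends_only_on_grad_sum: "depends_only_on (processor_samples n j K) (\<lambda>\<omega>. grad_sum \<omega> n j v K)"
  unfolding grad_sum_def
  by (intro depends_only_on_sum depends_only_on_mono[OF depends_only_on_local_grad])
    (auto simp: processor_samples_def)

lemma
  assumes b: "B n \<ge> 1"
  shows integrable_grad_sum: "integrable \<Omega> (\<lambda>\<omega>. grad_sum \<omega> n j v K)"
    and integrable_grad_sum_squared: "integrable \<Omega> (\<lambda>\<omega>. (norm (grad_sum \<omega> n j v K))\<^sup>2)"
    and integral_grad_sum_squared: "(\<integral>\<omega>. (norm (grad_sum \<omega> n j v K))\<^sup>2 \<partial>\<Omega>)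
      \<le> real K * (\<Sum>k=1..K. \<integral>\<omega>. (norm (local_grad \<omega> n j v k))\<^sup>2 \<partial>\<Omega>)"
    and norm_integral_grad_sum_squared: "(norm (\<integral>\<omega>. grad_sum \<omega> n j v K \<partial>\<Omega>))\<^sup>2
      \<le> real K * (\<Sum>k=1..K. \<integral>\<omega>. (norm (gradF (local_iterate \<omega> n j v (k - 1))))\<^sup>2 \<partial>\<Omega>)"
proof -
  have sq: "(norm (grad_sum \<omega> n j v K))\<^sup>2 \<le> real K * (\<Sum>k=1..K. (norm (local_grad \<omega> n j v k))\<^sup>2)" for \<omega>
    unfolding grad_sum_def using norm_sum_squared_le[of "local_grad \<omega> n j v" "{1..K}"] by simp
  have i2: "integrable \<Omega> (\<lambda>\<omega>. real K * (\<Sum>k=1..K. (norm (local_grad \<omega> n j v k))\<^sup>2))"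
    using integrable_local_grad_squared[OF b] by auto
  show "integrable \<Omega> (\<lambda>\<omega>. grad_sum \<omega> n j v K)"
    unfolding grad_sum_def using integrable_local_grad[OF b] by auto
  show i: "integrable \<Omega> (\<lambda>\<omega>. (norm (grad_sum \<omega> n j v K))\<^sup>2)"
  proof (rule Bochner_Integration.integrable_bound[OF i2])
    show "AE \<omega> in \<Omega>. norm ((norm (grad_sum \<omega> n j v K))\<^sup>2) \<le> norm (real K * (\<Sum>k=1..K. (norm (local_grad \<omega> n j v k))\<^sup>2))"
      using sq by (intro AE_I2) (simp add: abs_of_nonneg sum_nonneg)
  qed simp
  have "(\<integral>\<omega>. (norm (grad_sum \<omega> n j v K))\<^sup>2 \<partial>\<Omega>) \<le> (\<integral>\<omega>. real K * (\<Sum>k=1..K. (norm (local_grad \<omega> n j v k))\<^sup>2) \<partial>\<Omega>)"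
    by (rule integral_mono[OF i i2 sq])
  then show "(\<integral>\<omega>. (norm (grad_sum \<omega> n j v K))\<^sup>2 \<partial>\<Omega>) \<le> real K * (\<Sum>k=1..K. \<integral>\<omega>. (norm (local_grad \<omega> n j v k))\<^sup>2 \<partial>\<Omega>)"
    using integrable_local_grad_squared[OF b] by (simp add: integral_sum)
  have "(\<integral>\<omega>. grad_sum \<omega> n j v K \<partial>\<Omega>) = (\<Sum>k=1..K. \<integral>\<omega>. gradF (local_iterate \<omega> n j v (k - 1)) \<partial>\<Omega>)"
    unfolding grad_sum_def using integrable_local_grad[OF b] integral_local_grad[OF b] by (simp add: integral_sum)
  then have "(norm (\<integral>\<omega>. grad_sum \<omega> n j v K \<partial>\<Omega>))\<^sup>2
      \<le> real K * (\<Sum>k=1..K. (norm (\<integral>\<omega>. gradF (local_iterate \<omega> n j v (k - 1)) \<partial>\<Omega>))\<^sup>2)"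
    using norm_sum_squared_le[of "\<lambda>k. \<integral>\<omega>. gradF (local_iterate \<omega> n j v (k - 1)) \<partial>\<Omega>" "{1..K}"] by simp
  also have "\<dots> \<le> real K * (\<Sum>k=1..K. \<integral>\<omega>. (norm (gradF (local_iterate \<omega> n j v (k - 1))))\<^sup>2 \<partial>\<Omega>)"
    using integrable_gradF_local_iterate[OF b] integrable_gradF_local_iterate_squared[OF b]
    by (intro mult_left_mono sum_mono O.norm_integral_squared_le) auto
  finally show "(norm (\<integral>\<omega>. grad_sum \<omega> n j v K \<partial>\<Omega>))\<^sup>2
      \<le> real K * (\<Sum>k=1..K. \<integral>\<omega>. (norm (gradF (local_iterate \<omega> n j v (k - 1))))\<^sup>2 \<partial>\<Omega>)" .
qed

text \<open>Polarization \<open>2 a \<bullet> h = \<parallel>a\<parallel>\<^sup>2 + \<parallel>h\<parallel>\<^sup>2 - \<parallel>h - a\<parallel>\<^sup>2\<close> with \<open>h\<close> the gradient where step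
  \<open>k\<close> starts; the drift \<open>\<parallel>h - a\<parallel>\<close> is controlled by Lipschitz continuity and the steps
  taken so far.\<close>

lemma integral_inner_local_grad_lower:
  assumes b: "B n \<ge> 1" and k: "k \<ge> 1"
  shows "((norm (gradF v))\<^sup>2 + (\<integral>\<omega>. (norm (gradF (local_iterate \<omega> n j v (k - 1))))\<^sup>2 \<partial>\<Omega>)
      - L\<^sup>2 * (\<gamma> n)\<^sup>2 * ((real k - 1) * (\<Sum>i\<in>{1..<k}. \<integral>\<omega>. (norm (local_grad \<omega> n j v i))\<^sup>2 \<partial>\<Omega>))) / 2
    \<le> (\<integral>\<omega>. gradF v \<bullet> local_grad \<omega> n j v k \<partial>\<Omega>)"
proof -
  define a where "a = gradF v"
  define h where "h \<omega> = gradF (local_iterate \<omega> n j v (k - 1))" for \<omega>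
  define c where "c = L\<^sup>2 * (\<gamma> n)\<^sup>2 * (real k - 1)"
  have ih: "integrable \<Omega> h" and ih2: "integrable \<Omega> (\<lambda>\<omega>. (norm (h \<omega>))\<^sup>2)"
    unfolding h_def using integrable_gradF_local_iterate[OF b k] integrable_gradF_local_iterate_squared[OF b k] .
  have i3: "integrable \<Omega> (\<lambda>\<omega>. \<Sum>i\<in>{1..<k}. (norm (local_grad \<omega> n j v i))\<^sup>2)"
    using integrable_local_grad_squared[OF b] by auto
  have "(\<integral>\<omega>. a \<bullet> local_grad \<omega> n j v k \<partial>\<Omega>) = (\<integral>\<omega>. a \<bullet> h \<omega> \<partial>\<Omega>)"
    using integrable_local_grad[OF b k] integral_local_grad[OF b k] ih by (simp add: h_def[abs_def])
  moreover have "((norm a)\<^sup>2 + (norm (h \<omega>))\<^sup>2 - c * (\<Sum>i\<in>{1..<k}. (norm (local_grad \<omega> n j v i))\<^sup>2)) / 2 \<le> a \<bullet> h \<omega>" for \<omega>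
  proof -
    have "(norm (h \<omega> - a))\<^sup>2 \<le> (L * norm (local_iterate \<omega> n j v (k - 1) - v))\<^sup>2"
      unfolding h_def a_def using lip by (intro power_mono) auto
    also have "local_iterate \<omega> n j v (k - 1) - v = - \<gamma> n *\<^sub>R (\<Sum>i\<in>{1..<k}. local_grad \<omega> n j v i)"
      using local_iterate_minus[of \<omega> n j v "k - 1"] k by (simp add: atLeastLessThanSuc_atLeastAtMost[symmetric])
    also have "(L * norm (- \<gamma> n *\<^sub>R (\<Sum>i\<in>{1..<k}. local_grad \<omega> n j v i)))\<^sup>2
        = L\<^sup>2 * (\<gamma> n)\<^sup>2 * (norm (\<Sum>i\<in>{1..<k}. local_grad \<omega> n j v i))\<^sup>2"
      by (simp add: power_mult_distrib)
    also have "\<dots> \<le> c * (\<Sum>i\<in>{1..<k}. (norm (local_grad \<omega> n j v i))\<^sup>2)"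
      using norm_sum_squared_le[of "local_grad \<omega> n j v" "{1..<k}"] k
      unfolding c_def by (simp add: of_nat_diff mult.assoc mult_left_mono)
    moreover have "(norm (h \<omega> - a))\<^sup>2 = (norm (h \<omega>))\<^sup>2 - 2 * (a \<bullet> h \<omega>) + (norm a)\<^sup>2"
      by (simp add: power2_norm_eq_inner inner_diff_left inner_diff_right inner_commute)
    ultimately show ?thesis by simp
  qed
  then have "(\<integral>\<omega>. ((norm a)\<^sup>2 + (norm (h \<omega>))\<^sup>2 - c * (\<Sum>i\<in>{1..<k}. (norm (local_grad \<omega> n j v i))\<^sup>2)) / 2 \<partial>\<Omega>)
      \<le> (\<integral>\<omega>. a \<bullet> h \<omega> \<partial>\<Omega>)"
    by (intro integral_mono) (use ih ih2 i3 in auto)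
  moreover have "(\<integral>\<omega>. ((norm a)\<^sup>2 + (norm (h \<omega>))\<^sup>2 - c * (\<Sum>i\<in>{1..<k}. (norm (local_grad \<omega> n j v i))\<^sup>2)) / 2 \<partial>\<Omega>)
      = ((norm a)\<^sup>2 + (\<integral>\<omega>. (norm (h \<omega>))\<^sup>2 \<partial>\<Omega>) - c * (\<Sum>i\<in>{1..<k}. \<integral>\<omega>. (norm (local_grad \<omega> n j v i))\<^sup>2 \<partial>\<Omega>)) / 2"
    using ih2 i3 integrable_local_grad_squared[OF b] by (simp add: integral_sum O.prob_space)
  ultimately show ?thesis by (simp add: a_def h_def c_def mult.assoc)
qed

definition noise_bound :: "nat \<Rightarrow> nat \<Rightarrow> nat \<Rightarrow> real" where
  "noise_bound P K n = L * (\<gamma> n)\<^sup>2 * (real K)\<^sup>2 * (M / real (B n)) / (2 * real P)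
    + L\<^sup>2 * (\<gamma> n)^3 * (M / real (B n)) * (real K - 1) * real K * (2 * real K - 1) / 12"

lemma noise_bound_nonneg:
  assumes "K \<ge> 1" and "\<gamma> n \<ge> 0"
  shows "noise_bound P K n \<ge> 0"
  using assms L_pos M_nonneg unfolding noise_bound_def
  by (intro add_nonneg_nonneg mult_nonneg_nonneg divide_nonneg_nonneg) auto

lemma processor_descent:
  assumes b: "B n \<ge> 1" and K: "K \<ge> 1" and P: "P \<ge> 1" and \<gamma>: "\<gamma> n > 0"
    and step1: "1 \<ge> L\<^sup>2 * (\<gamma> n)\<^sup>2 * (real K + 1) * (real K - 2) / 2 + L * \<gamma> n * real K"
    and step2: "1 - \<delta> \<ge> L\<^sup>2 * (\<gamma> n)\<^sup>2"
  shows "- \<gamma> n * (gradF v \<bullet> (\<integral>\<omega>. grad_sum \<omega> n j v K \<partial>\<Omega>))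
       + L * (\<gamma> n)\<^sup>2 / (2 * real P) * ((\<integral>\<omega>. (norm (grad_sum \<omega> n j v K))\<^sup>2 \<partial>\<Omega>)
         + (real P - 1) * (norm (\<integral>\<omega>. grad_sum \<omega> n j v K \<partial>\<Omega>))\<^sup>2)
     \<le> - \<gamma> n * (real K - 1 + \<delta>) / 2 * (norm (gradF v))\<^sup>2 + noise_bound P K n"
proof -
  define H where "H k = (\<integral>\<omega>. (norm (gradF (local_iterate \<omega> n j v (k - 1))))\<^sup>2 \<partial>\<Omega>)" for k
  define S where "S k = (\<integral>\<omega>. (norm (local_grad \<omega> n j v k))\<^sup>2 \<partial>\<Omega>)" for k
  define E where "E k = (\<integral>\<omega>. gradF v \<bullet> local_grad \<omega> n j v k \<partial>\<Omega>)" for k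
  have "gradF v \<bullet> (\<integral>\<omega>. grad_sum \<omega> n j v K \<partial>\<Omega>) = (\<integral>\<omega>. gradF v \<bullet> grad_sum \<omega> n j v K \<partial>\<Omega>)"
    using integrable_grad_sum[OF b] by simp
  also have "\<dots> = (\<Sum>k=1..K. E k)"
    unfolding grad_sum_def E_def using integrable_local_grad[OF b] by (simp add: inner_sum_right integral_sum)
  finally have sumE: "gradF v \<bullet> (\<integral>\<omega>. grad_sum \<omega> n j v K \<partial>\<Omega>) = (\<Sum>k=1..K. E k)" .
  have "- \<gamma> n * (\<Sum>k=1..K. E k)
       + L * (\<gamma> n)\<^sup>2 / (2 * real P) * ((\<integral>\<omega>. (norm (grad_sum \<omega> n j v K))\<^sup>2 \<partial>\<Omega>)
         + (real P - 1) * (norm (\<integral>\<omega>. grad_sum \<omega> n j v K \<partial>\<Omega>))\<^sup>2)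
     \<le> - \<gamma> n * (real K - 1 + \<delta>) / 2 * (norm (gradF v))\<^sup>2 + L * (\<gamma> n)\<^sup>2 * (real K)\<^sup>2 * (M / real (B n)) / (2 * real P)
        + L\<^sup>2 * (\<gamma> n)^3 * (M / real (B n)) * (real K - 1) * real K * (2 * real K - 1) / 12"
  proof (rule local_descent_inequality[OF K P L_pos \<gamma> _ step1 step2])
    show "H 1 = (norm (gradF v))\<^sup>2" by (simp add: H_def O.prob_space)
    show "H k \<ge> 0" for k unfolding H_def by simp
    show "S k \<le> H k + M / real (B n)" if "k \<in> {1..K}" for k
      unfolding S_def H_def using integral_local_grad_squared[OF b] that by auto
    show "((norm (gradF v))\<^sup>2 + H k - L\<^sup>2 * (\<gamma> n)\<^sup>2 * ((real k - 1) * (\<Sum>i\<in>{1..<k}. S i))) / 2 \<le> E k"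
      if "k \<in> {1..K}" for k
      unfolding H_def S_def E_def using integral_inner_local_grad_lower[OF b] that by auto
    show "(\<integral>\<omega>. (norm (grad_sum \<omega> n j v K))\<^sup>2 \<partial>\<Omega>) \<le> real K * (\<Sum>k=1..K. S k)"
      unfolding S_def by (rule integral_grad_sum_squared[OF b])
    show "(norm (\<integral>\<omega>. grad_sum \<omega> n j v K \<partial>\<Omega>))\<^sup>2 \<le> real K * (\<Sum>k=1..K. H k)"
      unfolding H_def by (rule norm_integral_grad_sum_squared[OF b])
  qed (use M_nonneg in simp)
  then show ?thesis unfolding sumE noise_bound_def by (simp only: add.assoc)
qed

definition averaged_step :: "nat \<Rightarrow> nat \<Rightarrow> 'a \<Rightarrow> nat \<Rightarrow> (sidx \<Rightarrow> 'x) \<Rightarrow> 'a" where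
  "averaged_step P K v n \<omega> = (1 / real P) *\<^sub>R (\<Sum>j=1..P. local_iterate \<omega> n j v K)"

lemma kavg_seq_Suc_averaged_step:
  "kavg_seq G P K \<gamma> B w1 \<omega> (Suc m) = averaged_step P K (kavg_seq G P K \<gamma> B w1 \<omega> m) (Suc m) \<omega>"
  by (simp add: averaged_step_def)

lemma averaged_step_eq:
  assumes "P \<ge> 1"
  shows "averaged_step P K v n \<omega> = v + (- (\<gamma> n / real P)) *\<^sub>R (\<Sum>j=1..P. grad_sum \<omega> n j v K)"
  using assms by (simp add: averaged_step_def local_iterate_grad_sum sum_subtractf scaleR_diff_right
      sum_constant_scaleR scaleR_sum_right[symmetric] del: kavg_local.simps)

lemma depends_only_on_averaged_step:
  "depends_only_on (- samples_until m) (\<lambda>\<omega>. averaged_step P K v (Suc m) \<omega>)"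
  unfolding averaged_step_def
  by (intro depends_only_on_comp[where h="\<lambda>x. (1 / real P) *\<^sub>R x"] depends_only_on_sum
      depends_only_on_mono[OF depends_only_on_local_iterate_const])
    (auto simp: processor_samples_def samples_until_def)

text \<open>The processors use disjoint blocks of samples, so the cross terms in the second moment of the
  averaged displacement reduce to products of means.\<close>

lemma
  assumes b: "B n \<ge> 1"
  shows integrable_norm_sum_grad_sum_squared:
      "integrable \<Omega> (\<lambda>\<omega>. (norm (\<Sum>j=1..P. grad_sum \<omega> n j v K))\<^sup>2)"
    and integral_norm_sum_grad_sum_squared:
      "(\<integral>\<omega>. (norm (\<Sum>j=1..P. grad_sum \<omega> n j v K))\<^sup>2 \<partial>\<Omega>)
        \<le> (\<Sum>j=1..P. (\<integral>\<omega>. (norm (grad_sum \<omega> n j v K))\<^sup>2 \<partial>\<Omega>)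
          + (real P - 1) * (norm (\<integral>\<omega>. grad_sum \<omega> n j v K \<partial>\<Omega>))\<^sup>2)"
proof -
  define X where "X j \<omega> = grad_sum \<omega> n j v K" for j and \<omega> :: "sidx \<Rightarrow> 'x"
  define \<mu> where "\<mu> j = integral\<^sup>L \<Omega> (X j)" for j
  have X: "integrable \<Omega> (X j)" and X2: "integrable \<Omega> (\<lambda>\<omega>. (norm (X j \<omega>))\<^sup>2)" for j
    unfolding X_def[abs_def] using integrable_grad_sum[OF b] integrable_grad_sum_squared[OF b] by auto
  note indep = integral_norm_sum_independent[of "{1..P}" X "\<lambda>j. processor_samples n j K", OF _ X X2]
  have indep_sum: "integrable \<Omega> (\<lambda>\<omega>. (norm (\<Sum>j=1..P. X j \<omega>))\<^sup>2)"
      "(\<integral>\<omega>. (norm (\<Sum>j=1..P. X j \<omega>))\<^sup>2 \<partial>\<Omega>)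
        = (norm (\<Sum>j=1..P. \<mu> j))\<^sup>2 + (\<Sum>j=1..P. (\<integral>\<omega>. (norm (X j \<omega>))\<^sup>2 \<partial>\<Omega>) - (norm (\<mu> j))\<^sup>2)"
    using indep depends_only_on_grad_sum unfolding X_def[abs_def] \<mu>_def
    by (auto simp: processor_samples_def)
  then show "integrable \<Omega> (\<lambda>\<omega>. (norm (\<Sum>j=1..P. grad_sum \<omega> n j v K))\<^sup>2)"
    by (simp add: X_def)
  have "(norm (\<Sum>j=1..P. \<mu> j))\<^sup>2 \<le> real P * (\<Sum>j=1..P. (norm (\<mu> j))\<^sup>2)"
    using norm_sum_squared_le[of \<mu> "{1..P}"] by simp
  then have "(\<integral>\<omega>. (norm (\<Sum>j=1..P. X j \<omega>))\<^sup>2 \<partial>\<Omega>)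
      \<le> (\<Sum>j=1..P. (\<integral>\<omega>. (norm (X j \<omega>))\<^sup>2 \<partial>\<Omega>) + (real P - 1) * (norm (\<mu> j))\<^sup>2)"
    unfolding indep_sum(2) by (simp add: sum.distrib sum_subtractf sum_distrib_left algebra_simps)
  then show "(\<integral>\<omega>. (norm (\<Sum>j=1..P. grad_sum \<omega> n j v K))\<^sup>2 \<partial>\<Omega>)
      \<le> (\<Sum>j=1..P. (\<integral>\<omega>. (norm (grad_sum \<omega> n j v K))\<^sup>2 \<partial>\<Omega>)
        + (real P - 1) * (norm (\<integral>\<omega>. grad_sum \<omega> n j v K \<partial>\<Omega>))\<^sup>2)"
    by (simp add: X_def[abs_def] \<mu>_def)
qed

lemma
  assumes b: "B n \<ge> 1" and K: "K \<ge> 1" and P: "P \<ge> 1" and \<gamma>: "\<gamma> n > 0"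
    and step1: "1 \<ge> L\<^sup>2 * (\<gamma> n)\<^sup>2 * (real K + 1) * (real K - 2) / 2 + L * \<gamma> n * real K"
    and step2: "1 - \<delta> \<ge> L\<^sup>2 * (\<gamma> n)\<^sup>2"
  shows integrable_F_averaged_step: "integrable \<Omega> (\<lambda>\<omega>. F (averaged_step P K v n \<omega>))"
    and averaged_step_descent: "(\<integral>\<omega>. F (averaged_step P K v n \<omega>) \<partial>\<Omega>)
      \<le> F v - \<gamma> n * (real K - 1 + \<delta>) / 2 * (norm (gradF v))\<^sup>2 + noise_bound P K n"
proof -
  define X where "X j \<omega> = grad_sum \<omega> n j v K" for j and \<omega> :: "sidx \<Rightarrow> 'x"
  define \<mu> where "\<mu> j = integral\<^sup>L \<Omega> (X j)" for j
  define Q where "Q j = (\<integral>\<omega>. (norm (X j \<omega>))\<^sup>2 \<partial>\<Omega>) + (real P - 1) * (norm (\<mu> j))\<^sup>2" for j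
  define c where "c = \<gamma> n / real P"
  define d where "d \<omega> = - c *\<^sub>R (\<Sum>j=1..P. X j \<omega>)" for \<omega>
  have step: "averaged_step P K v n \<omega> = v + d \<omega>" for \<omega>
    using averaged_step_eq[OF P] by (simp add: d_def X_def c_def)
  have X: "integrable \<Omega> (X j)" for j
    unfolding X_def[abs_def] using integrable_grad_sum[OF b] by auto
  have d: "integrable \<Omega> d" unfolding d_def using X by auto
  have d2_eq: "(norm (d \<omega>))\<^sup>2 = c\<^sup>2 * (norm (\<Sum>j=1..P. X j \<omega>))\<^sup>2" for \<omega>
    by (simp add: d_def power_mult_distrib)
  have d2: "integrable \<Omega> (\<lambda>\<omega>. (norm (d \<omega>))\<^sup>2)"
    unfolding d2_eq X_def using integrable_norm_sum_grad_sum_squared[OF b] by simp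
  show "integrable \<Omega> (\<lambda>\<omega>. F (averaged_step P K v n \<omega>))"
    unfolding step using O.integrable_descent[OF grad lip _ d d2] L_pos by simp
  have "(\<integral>\<omega>. F (averaged_step P K v n \<omega>) \<partial>\<Omega>)
      \<le> F v + gradF v \<bullet> integral\<^sup>L \<Omega> d + L / 2 * (\<integral>\<omega>. (norm (d \<omega>))\<^sup>2 \<partial>\<Omega>)"
    unfolding step using O.expectation_descent_lemma[OF grad lip _ d d2] L_pos by simp
  also have "gradF v \<bullet> integral\<^sup>L \<Omega> d = - c * (\<Sum>j=1..P. gradF v \<bullet> \<mu> j)"
    unfolding d_def \<mu>_def using X by (simp add: inner_sum_right)
  also have "(\<integral>\<omega>. (norm (d \<omega>))\<^sup>2 \<partial>\<Omega>) \<le> c\<^sup>2 * (\<Sum>j=1..P. Q j)"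
    unfolding d2_eq Q_def X_def \<mu>_def using integral_norm_sum_grad_sum_squared[OF b]
    by (simp add: mult_left_mono)
  then have "F v + - c * (\<Sum>j=1..P. gradF v \<bullet> \<mu> j) + L / 2 * (\<integral>\<omega>. (norm (d \<omega>))\<^sup>2 \<partial>\<Omega>)
      \<le> F v + (- c * (\<Sum>j=1..P. gradF v \<bullet> \<mu> j) + L / 2 * (c\<^sup>2 * (\<Sum>j=1..P. Q j)))"
    using L_pos by simp
  also have "\<dots> = F v + (1 / real P) * (\<Sum>j=1..P. - \<gamma> n * (gradF v \<bullet> \<mu> j) + L * (\<gamma> n)\<^sup>2 / (2 * real P) * Q j)"
    unfolding c_def averaged_descent_terms_eq[OF P] ..
  also have "\<dots> \<le> F v + (1 / real P) * (\<Sum>j=1..P. - \<gamma> n * (real K - 1 + \<delta>) / 2 * (norm (gradF v))\<^sup>2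
      + noise_bound P K n)"
    unfolding X_def \<mu>_def Q_def
    by (intro add_left_mono mult_left_mono sum_mono processor_descent[OF b K P \<gamma> step1 step2]) auto
  finally show "(\<integral>\<omega>. F (averaged_step P K v n \<omega>) \<partial>\<Omega>)
      \<le> F v - \<gamma> n * (real K - 1 + \<delta>) / 2 * (norm (gradF v))\<^sup>2 + noise_bound P K n"
    using P by simp
qed

lemma nn_integral_averaged_step_le:
  assumes b: "B n \<ge> 1" and K: "K \<ge> 1" and P: "P \<ge> 1" and \<gamma>: "\<gamma> n > 0"
    and step1: "1 \<ge> L\<^sup>2 * (\<gamma> n)\<^sup>2 * (real K + 1) * (real K - 2) / 2 + L * \<gamma> n * real K"
    and step2: "1 - \<delta> \<ge> L\<^sup>2 * (\<gamma> n)\<^sup>2" and \<delta>: "\<delta> > 0"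
    and Fv: "Fstar \<le> F v" and low: "\<And>\<omega>. \<omega> \<in> space \<Omega> \<Longrightarrow> Fstar \<le> F (averaged_step P K v n \<omega>)"
  shows "(\<integral>\<^sup>+\<omega>. ennreal (F (averaged_step P K v n \<omega>) - Fstar) \<partial>\<Omega>)
      + ennreal (\<gamma> n * (real K - 1 + \<delta>) / 2 * (norm (gradF v))\<^sup>2)
    \<le> ennreal (F v - Fstar) + ennreal (noise_bound P K n)"
proof -
  let ?f = "\<lambda>\<omega>. F (averaged_step P K v n \<omega>) - Fstar"
  let ?c = "\<gamma> n * (real K - 1 + \<delta>) / 2 * (norm (gradF v))\<^sup>2"
  have c: "?c \<ge> 0" using K \<gamma> \<delta> by simp
  have i: "integrable \<Omega> ?f"
    using integrable_F_averaged_step[OF b K P \<gamma> step1 step2] by simp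
  have "(\<integral>\<^sup>+\<omega>. ennreal (?f \<omega>) \<partial>\<Omega>) = ennreal (\<integral>\<omega>. ?f \<omega> \<partial>\<Omega>)"
    by (rule nn_integral_eq_integral[OF i]) (use low in auto)
  moreover have "0 \<le> (\<integral>\<omega>. ?f \<omega> \<partial>\<Omega>)"
    by (rule integral_nonneg_AE) (use low in auto)
  moreover have "(\<integral>\<omega>. ?f \<omega> \<partial>\<Omega>) = (\<integral>\<omega>. F (averaged_step P K v n \<omega>) \<partial>\<Omega>) - Fstar"
    using integrable_F_averaged_step[OF b K P \<gamma> step1 step2] by (simp add: O.prob_space)
  then have "(\<integral>\<omega>. ?f \<omega> \<partial>\<Omega>) + ?c \<le> F v - Fstar + noise_bound P K n"
    using averaged_step_descent[OF b K P \<gamma> step1 step2, of v] by linarith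
  ultimately show ?thesis
    using c Fv noise_bound_nonneg[OF K, of n] \<gamma>
    by (simp add: ennreal_plus[symmetric] del: ennreal_plus)
qed

lemma averaged_step_kavg_seq_splice:
  "averaged_step P K (kavg_seq G P K \<gamma> B w1 \<omega> m) (Suc m) \<omega>'
    = kavg_seq G P K \<gamma> B w1 (splice_on (samples_until m) \<omega> \<omega>') (Suc m)"
proof -
  let ?\<omega>'' = "splice_on (samples_until m) \<omega> \<omega>'"
  have "kavg_seq G P K \<gamma> B w1 ?\<omega>'' (Suc m) = averaged_step P K (kavg_seq G P K \<gamma> B w1 ?\<omega>'' m) (Suc m) ?\<omega>''"
    by (rule kavg_seq_Suc_averaged_step)
  also have "\<dots> = averaged_step P K (kavg_seq G P K \<gamma> B w1 \<omega> m) (Suc m) ?\<omega>''"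
    by (simp only: depends_only_on_splice_left[OF depends_only_on_kavg_seq])
  also have "\<dots> = averaged_step P K (kavg_seq G P K \<gamma> B w1 \<omega> m) (Suc m) \<omega>'"
    by (rule depends_only_on_splice_right[OF depends_only_on_averaged_step])
  finally show ?thesis ..
qed

text \<open>Condition on the samples of the previous rounds and apply the one-round bound at the frozen
  iterate.\<close>

lemma expected_outer_descent:
  assumes b: "B (Suc m) \<ge> 1" and K: "K \<ge> 1" and P: "P \<ge> 1" and \<gamma>: "\<gamma> (Suc m) > 0"
    and step1: "1 \<ge> L\<^sup>2 * (\<gamma> (Suc m))\<^sup>2 * (real K + 1) * (real K - 2) / 2 + L * \<gamma> (Suc m) * real K"
    and step2: "1 - \<delta> \<ge> L\<^sup>2 * (\<gamma> (Suc m))\<^sup>2" and \<delta>: "\<delta> > 0"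
    and low: "\<And>\<omega> m. \<omega> \<in> space \<Omega> \<Longrightarrow> Fstar \<le> F (kavg_seq G P K \<gamma> B w1 \<omega> m)"
  shows "(\<integral>\<^sup>+\<omega>. ennreal (F (kavg_seq G P K \<gamma> B w1 \<omega> (Suc m)) - Fstar) \<partial>\<Omega>)
      + ennreal (\<gamma> (Suc m) * (real K - 1 + \<delta>) / 2) * (\<integral>\<^sup>+\<omega>. ennreal ((norm (gradF (kavg_seq G P K \<gamma> B w1 \<omega> m)))\<^sup>2) \<partial>\<Omega>)
    \<le> (\<integral>\<^sup>+\<omega>. ennreal (F (kavg_seq G P K \<gamma> B w1 \<omega> m) - Fstar) \<partial>\<Omega>) + ennreal (noise_bound P K (Suc m))"
proof -
  define w where "w \<omega> = kavg_seq G P K \<gamma> B w1 \<omega> m" for \<omega>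
  define \<psi> where "\<psi> v \<omega> = ennreal (F (averaged_step P K v (Suc m) \<omega>) - Fstar)" for v \<omega>
  define c where "c = \<gamma> (Suc m) * (real K - 1 + \<delta>) / 2"
  have c: "c \<ge> 0" using K \<gamma> \<delta> by (simp add: c_def)
  have dw: "depends_only_on (samples_until m) w"
    unfolding w_def[abs_def] by (rule depends_only_on_kavg_seq)
  have d\<psi>: "depends_only_on (- samples_until m) (\<psi> v)" for v
    unfolding \<psi>_def[abs_def] by (rule depends_only_on_comp[OF depends_only_on_averaged_step])
  have next_eq: "\<psi> (w \<omega>) \<omega> = ennreal (F (kavg_seq G P K \<gamma> B w1 \<omega> (Suc m)) - Fstar)" for \<omega>
    by (simp only: \<psi>_def w_def kavg_seq_Suc_averaged_step)
  have m\<psi>: "(\<lambda>\<omega>. \<psi> (w \<omega>) \<omega>) \<in> borel_measurable \<Omega>" unfolding next_eq by measurable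
  have "(\<integral>\<^sup>+\<omega>. ennreal (F (kavg_seq G P K \<gamma> B w1 \<omega> (Suc m)) - Fstar) \<partial>\<Omega>)
      = (\<integral>\<^sup>+\<omega>. \<integral>\<^sup>+\<omega>'. \<psi> (w \<omega>) \<omega>' \<partial>\<Omega> \<partial>\<Omega>)"
    using nn_integral_freeze[OF m\<psi> dw d\<psi>] unfolding next_eq .
  moreover have "ennreal c * (\<integral>\<^sup>+\<omega>. ennreal ((norm (gradF (w \<omega>)))\<^sup>2) \<partial>\<Omega>)
      = (\<integral>\<^sup>+\<omega>. ennreal (c * (norm (gradF (w \<omega>)))\<^sup>2) \<partial>\<Omega>)"
    using c by (simp add: w_def nn_integral_cmult ennreal_mult)
  ultimately have "(\<integral>\<^sup>+\<omega>. ennreal (F (kavg_seq G P K \<gamma> B w1 \<omega> (Suc m)) - Fstar) \<partial>\<Omega>)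
      + ennreal c * (\<integral>\<^sup>+\<omega>. ennreal ((norm (gradF (w \<omega>)))\<^sup>2) \<partial>\<Omega>)
      = (\<integral>\<^sup>+\<omega>. (\<integral>\<^sup>+\<omega>'. \<psi> (w \<omega>) \<omega>' \<partial>\<Omega>) + ennreal (c * (norm (gradF (w \<omega>)))\<^sup>2) \<partial>\<Omega>)"
    using measurable_nn_integral_freeze[OF m\<psi> dw d\<psi>] by (simp add: w_def nn_integral_add)
  also have "\<dots> \<le> (\<integral>\<^sup>+\<omega>. ennreal (F (w \<omega>) - Fstar) + ennreal (noise_bound P K (Suc m)) \<partial>\<Omega>)"
  proof (rule nn_integral_mono)
    fix \<omega> :: "sidx \<Rightarrow> 'x" assume \<omega>: "\<omega> \<in> space \<Omega>"
    have step_low: "Fstar \<le> F (averaged_step P K (w \<omega>) (Suc m) \<omega>')" if "\<omega>' \<in> space \<Omega>" for \<omega>'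
      unfolding w_def averaged_step_kavg_seq_splice using low[OF splice_on_space[OF \<omega> that]] .
    show "(\<integral>\<^sup>+\<omega>'. \<psi> (w \<omega>) \<omega>' \<partial>\<Omega>) + ennreal (c * (norm (gradF (w \<omega>)))\<^sup>2)
        \<le> ennreal (F (w \<omega>) - Fstar) + ennreal (noise_bound P K (Suc m))"
      unfolding \<psi>_def c_def w_def
      by (rule nn_integral_averaged_step_le[OF b K P \<gamma> step1 step2 \<delta> low[OF \<omega>]])
        (use step_low in \<open>simp add: w_def\<close>)
  qed
  also have "\<dots> = (\<integral>\<^sup>+\<omega>. ennreal (F (w \<omega>) - Fstar) \<partial>\<Omega>) + ennreal (noise_bound P K (Suc m))"
    by (simp add: w_def nn_integral_add O.emeasure_space_1)
  finally show ?thesis by (simp add: w_def c_def)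
qed

lemma telescoped_descent:
  assumes b: "\<And>n. n \<ge> 1 \<Longrightarrow> B n \<ge> 1" and K: "K \<ge> 1" and P: "P \<ge> 1" and \<gamma>: "\<And>n. n \<ge> 1 \<Longrightarrow> \<gamma> n > 0"
    and step1: "\<And>n. n \<ge> 1 \<Longrightarrow> 1 \<ge> L\<^sup>2 * (\<gamma> n)\<^sup>2 * (real K + 1) * (real K - 2) / 2 + L * \<gamma> n * real K"
    and step2: "\<And>n. n \<ge> 1 \<Longrightarrow> 1 - \<delta> \<ge> L\<^sup>2 * (\<gamma> n)\<^sup>2" and \<delta>: "\<delta> > 0"
    and low: "\<And>\<omega> m. \<omega> \<in> space \<Omega> \<Longrightarrow> Fstar \<le> F (kavg_seq G P K \<gamma> B w1 \<omega> m)"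
  shows "(\<integral>\<^sup>+\<omega>. ennreal (F (kavg_seq G P K \<gamma> B w1 \<omega> N) - Fstar) \<partial>\<Omega>)
      + (\<Sum>m<N. ennreal (\<gamma> (Suc m) * (real K - 1 + \<delta>) / 2)
          * (\<integral>\<^sup>+\<omega>. ennreal ((norm (gradF (kavg_seq G P K \<gamma> B w1 \<omega> m)))\<^sup>2) \<partial>\<Omega>))
    \<le> ennreal (F w1 - Fstar) + (\<Sum>m<N. ennreal (noise_bound P K (Suc m)))"
proof (induction N)
  case 0
  show ?case by (simp add: O.emeasure_space_1)
next
  case (Suc N)
  let ?A = "\<lambda>N. \<integral>\<^sup>+\<omega>. ennreal (F (kavg_seq G P K \<gamma> B w1 \<omega> N) - Fstar) \<partial>\<Omega>"
  let ?C = "\<lambda>m. ennreal (\<gamma> (Suc m) * (real K - 1 + \<delta>) / 2)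
    * (\<integral>\<^sup>+\<omega>. ennreal ((norm (gradF (kavg_seq G P K \<gamma> B w1 \<omega> m)))\<^sup>2) \<partial>\<Omega>)"
  let ?R = "\<lambda>m. ennreal (noise_bound P K (Suc m))"
  have "?A (Suc N) + ?C N \<le> ?A N + ?R N"
    by (rule expected_outer_descent[OF b K P \<gamma> step1 step2 \<delta> low]) auto
  then have "?A (Suc N) + (\<Sum>m<Suc N. ?C m) \<le> (?A N + (\<Sum>m<N. ?C m)) + ?R N"
    by (simp add: ac_simps add_right_mono)
  also have "\<dots> \<le> (ennreal (F w1 - Fstar) + (\<Sum>m<N. ?R m)) + ?R N"
    using Suc by (rule add_right_mono)
  finally show ?case by (simp add: ac_simps)
qed

lemma nn_integral_sum_weighted_gradients:
  assumes c: "\<And>j. j \<ge> 1 \<Longrightarrow> c j \<ge> 0"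
  shows "(\<integral>\<^sup>+ \<omega>. ennreal (\<Sum>j=1..N. c j * (norm (gradF (kavg_w G P K \<gamma> B w1 \<omega> j)))\<^sup>2) \<partial>\<Omega>)
    = (\<Sum>m<N. ennreal (c (Suc m)) * (\<integral>\<^sup>+\<omega>. ennreal ((norm (gradF (kavg_seq G P K \<gamma> B w1 \<omega> m)))\<^sup>2) \<partial>\<Omega>))"
proof -
  have "ennreal (\<Sum>j=1..N. c j * (norm (gradF (kavg_w G P K \<gamma> B w1 \<omega> j)))\<^sup>2)
      = (\<Sum>m<N. ennreal (c (Suc m)) * ennreal ((norm (gradF (kavg_seq G P K \<gamma> B w1 \<omega> m)))\<^sup>2))" for \<omega>
  proof -
    have "ennreal (\<Sum>j=1..N. c j * (norm (gradF (kavg_w G P K \<gamma> B w1 \<omega> j)))\<^sup>2)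
        = (\<Sum>j=1..N. ennreal (c j * (norm (gradF (kavg_w G P K \<gamma> B w1 \<omega> j)))\<^sup>2))"
      using c by (intro sum_ennreal[symmetric]) auto
    also have "\<dots> = (\<Sum>m<N. ennreal (c (Suc m) * (norm (gradF (kavg_seq G P K \<gamma> B w1 \<omega> m)))\<^sup>2))"
      by (simp only: One_nat_def sum.atLeast1_atMost_eq kavg_w_def diff_Suc_Suc diff_zero)
    also have "\<dots> = (\<Sum>m<N. ennreal (c (Suc m)) * ennreal ((norm (gradF (kavg_seq G P K \<gamma> B w1 \<omega> m)))\<^sup>2))"
      using c by (intro sum.cong refl ennreal_mult) auto
    finally show ?thesis .
  qed
  then show ?thesis by (simp add: nn_integral_sum nn_integral_cmult)
qed

lemma sum_weighted_gradients_le: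
  assumes b: "\<And>n. n \<ge> 1 \<Longrightarrow> B n \<ge> 1" and K: "K \<ge> 1" and P: "P \<ge> 1" and \<gamma>: "\<And>n. n \<ge> 1 \<Longrightarrow> \<gamma> n > 0"
    and step1: "\<And>n. n \<ge> 1 \<Longrightarrow> 1 \<ge> L\<^sup>2 * (\<gamma> n)\<^sup>2 * (real K + 1) * (real K - 2) / 2 + L * \<gamma> n * real K"
    and step2: "\<And>n. n \<ge> 1 \<Longrightarrow> 1 - \<delta> \<ge> L\<^sup>2 * (\<gamma> n)\<^sup>2" and \<delta>: "\<delta> > 0"
    and low: "\<And>\<omega> m. \<omega> \<in> space \<Omega> \<Longrightarrow> Fstar \<le> F (kavg_seq G P K \<gamma> B w1 \<omega> m)"
  shows "(\<Sum>m<N. ennreal (\<gamma> (Suc m) * (real K - 1 + \<delta>) / 2)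
      * (\<integral>\<^sup>+\<omega>. ennreal ((norm (gradF (kavg_seq G P K \<gamma> B w1 \<omega> m)))\<^sup>2) \<partial>\<Omega>))
    \<le> ennreal (F w1 - Fstar + (\<Sum>m<N. noise_bound P K (Suc m)))"
proof -
  obtain \<omega>0 :: "sidx \<Rightarrow> 'x" where "\<omega>0 \<in> space \<Omega>" using O.not_empty by blast
  from low[OF this, of 0] have "F w1 - Fstar \<ge> 0" by simp
  moreover have "noise_bound P K (Suc m) \<ge> 0" for m
    using noise_bound_nonneg[OF K] \<gamma>[of "Suc m"] by simp
  ultimately have "ennreal (F w1 - Fstar) + (\<Sum>m<N. ennreal (noise_bound P K (Suc m)))
      = ennreal (F w1 - Fstar + (\<Sum>m<N. noise_bound P K (Suc m)))"
    by (simp add: sum_nonneg)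
  moreover have "(\<Sum>m<N. ennreal (\<gamma> (Suc m) * (real K - 1 + \<delta>) / 2)
      * (\<integral>\<^sup>+\<omega>. ennreal ((norm (gradF (kavg_seq G P K \<gamma> B w1 \<omega> m)))\<^sup>2) \<partial>\<Omega>))
    \<le> ennreal (F w1 - Fstar) + (\<Sum>m<N. ennreal (noise_bound P K (Suc m)))"
    by (rule order_trans[OF add_increasing[OF zero_le order_refl] telescoped_descent[OF b K P \<gamma> step1 step2 \<delta> low]])
  ultimately show ?thesis by simp
qed

lemma weighted_gradient_bound:
  assumes b: "\<And>n. n \<ge> 1 \<Longrightarrow> B n \<ge> 1" and K: "K \<ge> 1" and P: "P \<ge> 1" and \<gamma>: "\<And>n. n \<ge> 1 \<Longrightarrow> \<gamma> n > 0"
    and step1: "\<And>n. n \<ge> 1 \<Longrightarrow> 1 \<ge> L\<^sup>2 * (\<gamma> n)\<^sup>2 * (real K + 1) * (real K - 2) / 2 + L * \<gamma> n * real K"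
    and step2: "\<And>n. n \<ge> 1 \<Longrightarrow> 1 - \<delta> \<ge> L\<^sup>2 * (\<gamma> n)\<^sup>2" and \<delta>: "\<delta> > 0"
    and low: "\<And>\<omega> m. \<omega> \<in> space \<Omega> \<Longrightarrow> Fstar \<le> F (kavg_seq G P K \<gamma> B w1 \<omega> m)"
  shows "(\<integral>\<^sup>+ \<omega>. ennreal (\<Sum>j=1..N. \<gamma> j / (\<Sum>i=1..N. \<gamma> i) * (norm (gradF (kavg_w G P K \<gamma> B w1 \<omega> j)))\<^sup>2) \<partial>\<Omega>)
    \<le> ennreal (2 * (F w1 - Fstar) / ((real K - 1 + \<delta>) * (\<Sum>i=1..N. \<gamma> i))
      + (\<Sum>j=1..N. L * real K * (\<gamma> j)\<^sup>2 * M / (real (B j) * (real K - 1 + \<delta>) * (\<Sum>i=1..N. \<gamma> i))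
          * (real K / real P + L * (2 * real K - 1) * (real K - 1) * \<gamma> j / 6)))"
proof (cases "N = 0")
  case False
  define S where "S = (\<Sum>i=1..N. \<gamma> i)"
  define e where "e = real K - 1 + \<delta>"
  define \<kappa> where "\<kappa> = 2 / (e * S)"
  have e: "e > 0" using K \<delta> by (simp add: e_def)
  have S: "S > 0" unfolding S_def using False \<gamma> by (intro sum_pos) auto
  have \<kappa>: "\<kappa> \<ge> 0" using e S by (simp add: \<kappa>_def)
  have c: "\<gamma> (Suc m) * e / 2 \<ge> 0" for m using e \<gamma>[of "Suc m"] by simp
  have w: "\<gamma> j / S \<ge> 0" if "j \<ge> 1" for j using \<gamma>[OF that] S by simp
  have "ennreal (\<gamma> (Suc m) / S) = ennreal \<kappa> * ennreal (\<gamma> (Suc m) * e / 2)" for m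
    using \<kappa> c e by (simp add: \<kappa>_def ennreal_mult[symmetric])
  then have "(\<integral>\<^sup>+ \<omega>. ennreal (\<Sum>j=1..N. \<gamma> j / S * (norm (gradF (kavg_w G P K \<gamma> B w1 \<omega> j)))\<^sup>2) \<partial>\<Omega>)
      = ennreal \<kappa> * (\<Sum>m<N. ennreal (\<gamma> (Suc m) * e / 2)
        * (\<integral>\<^sup>+\<omega>. ennreal ((norm (gradF (kavg_seq G P K \<gamma> B w1 \<omega> m)))\<^sup>2) \<partial>\<Omega>))"
    by (subst nn_integral_sum_weighted_gradients[OF w]) (auto simp: sum_distrib_left mult.assoc)
  also have "\<dots> \<le> ennreal \<kappa> * ennreal (F w1 - Fstar + (\<Sum>m<N. noise_bound P K (Suc m)))"
    unfolding e_def by (intro mult_left_mono sum_weighted_gradients_le[OF b K P \<gamma> step1 step2 \<delta> low]) simp_all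
  also have "\<dots> = ennreal (\<kappa> * (F w1 - Fstar) + (\<Sum>m<N. \<kappa> * noise_bound P K (Suc m)))"
    using \<kappa> by (simp add: ennreal_mult'[symmetric] distrib_left sum_distrib_left)
  also have "(\<Sum>m<N. \<kappa> * noise_bound P K (Suc m))
      = (\<Sum>m<N. L * real K * (\<gamma> (Suc m))\<^sup>2 * M / (real (B (Suc m)) * e * S)
          * (real K / real P + L * (2 * real K - 1) * (real K - 1) * \<gamma> (Suc m) / 6))"
    unfolding \<kappa>_def noise_bound_def
    by (rule sum.cong[OF refl], rule noise_bound_rescaled) (use b P e S in auto)
  also have "\<dots> = (\<Sum>j=1..N. L * real K * (\<gamma> j)\<^sup>2 * M / (real (B j) * e * S)
          * (real K / real P + L * (2 * real K - 1) * (real K - 1) * \<gamma> j / 6))"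
    by (simp only: One_nat_def sum.atLeast1_atMost_eq)
  finally show ?thesis
    unfolding S_def[symmetric] e_def[symmetric] by (simp add: \<kappa>_def)
qed simp

lemma weighted_gradient_tendsto_zero:
  assumes b: "\<And>n. n \<ge> 1 \<Longrightarrow> B n \<ge> 1" and K: "K \<ge> 1" and P: "P \<ge> 1" and \<gamma>: "\<And>n. n \<ge> 1 \<Longrightarrow> \<gamma> n > 0"
    and step1: "\<And>n. n \<ge> 1 \<Longrightarrow> 1 \<ge> L\<^sup>2 * (\<gamma> n)\<^sup>2 * (real K + 1) * (real K - 2) / 2 + L * \<gamma> n * real K"
    and step2: "\<And>n. n \<ge> 1 \<Longrightarrow> 1 - \<delta> \<ge> L\<^sup>2 * (\<gamma> n)\<^sup>2" and \<delta>: "\<delta> > 0"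
    and low: "\<And>\<omega> m. \<omega> \<in> space \<Omega> \<Longrightarrow> Fstar \<le> F (kavg_seq G P K \<gamma> B w1 \<omega> m)"
    and div: "filterlim (\<lambda>N. \<Sum>j=1..N. \<gamma> j) at_top sequentially"
    and s1: "summable (\<lambda>j. real K * (\<gamma> (Suc j))\<^sup>2 / (real P * real (B (Suc j))))"
    and s2: "summable (\<lambda>j. (\<gamma> (Suc j)) ^ 3)"
  shows "(\<lambda>N. \<integral>\<^sup>+ \<omega>. ennreal (\<Sum>j=1..N. \<gamma> j / (\<Sum>i=1..N. \<gamma> i) * (norm (gradF (kavg_w G P K \<gamma> B w1 \<omega> j)))\<^sup>2) \<partial>\<Omega>)
    \<longlonglongrightarrow> 0"
proof (rule tendsto_sandwich[OF _ _ tendsto_const])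
  obtain \<omega>0 :: "sidx \<Rightarrow> 'x" where "\<omega>0 \<in> space \<Omega>" using O.not_empty by blast
  from low[OF this, of 0] have D0: "F w1 - Fstar \<ge> 0" by simp
  show "(\<lambda>N. ennreal (2 * (F w1 - Fstar) / ((real K - 1 + \<delta>) * (\<Sum>i=1..N. \<gamma> i))
      + (\<Sum>j=1..N. L * real K * (\<gamma> j)\<^sup>2 * M / (real (B j) * (real K - 1 + \<delta>) * (\<Sum>i=1..N. \<gamma> i))
          * (real K / real P + L * (2 * real K - 1) * (real K - 1) * \<gamma> j / 6)))) \<longlonglongrightarrow> 0"
    using tendsto_ennrealI[OF weighted_bound_tendsto_zero[OF \<gamma> b K P L_pos M_nonneg \<delta> D0 div s1 s2]] by simp
  show "\<forall>\<^sub>F N in sequentially. (\<integral>\<^sup>+ \<omega>. ennreal (\<Sum>j=1..N. \<gamma> j / (\<Sum>i=1..N. \<gamma> i)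
      * (norm (gradF (kavg_w G P K \<gamma> B w1 \<omega> j)))\<^sup>2) \<partial>\<Omega>)
    \<le> ennreal (2 * (F w1 - Fstar) / ((real K - 1 + \<delta>) * (\<Sum>i=1..N. \<gamma> i))
      + (\<Sum>j=1..N. L * real K * (\<gamma> j)\<^sup>2 * M / (real (B j) * (real K - 1 + \<delta>) * (\<Sum>i=1..N. \<gamma> i))
          * (real K / real P + L * (2 * real K - 1) * (real K - 1) * \<gamma> j / 6)))"
    using weighted_gradient_bound[OF b K P \<gamma> step1 step2 \<delta> low] by simp
qed simp

end

theorem theorem2:
  fixes F :: "'a::euclidean_space \<Rightarrow> real"
    and gradF :: "'a \<Rightarrow> 'a"
    and L M Fstar \<delta> :: real
    and D :: "'x measure"
    and G :: "'a \<Rightarrow> 'x \<Rightarrow> 'a"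
    and P K :: nat
    and \<gamma> :: "nat \<Rightarrow> real"
    and B :: "nat \<Rightarrow> nat"
    and w1 :: 'a
  defines "\<Omega> \<equiv> PiM (UNIV :: sidx set) (\<lambda>_. D)"
    and "wt \<equiv> \<lambda>\<omega> n. kavg_w G P K \<gamma> B w1 \<omega> n"
  assumes grad: "\<And>w. GDERIV F w :> gradF w"
    and L_pos: "L > 0"
    and lip: "\<And>w w'. norm (gradF w - gradF w') \<le> L * norm (w - w')"
    and D_prob: "prob_space D"
    and G_meas: "(\<lambda>(w, x). G w x) \<in> borel_measurable (borel \<Otimes>\<^sub>M D)"
    and G_int: "\<And>w. integrable D (G w)"
    and G_int2: "\<And>w. integrable D (\<lambda>x. (norm (G w x))\<^sup>2)"
    and unbiased: "\<And>w. (\<integral>x. G w x \<partial>D) = gradF w"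
    and variance: "\<And>w. (\<integral>x. (norm (G w x))\<^sup>2 \<partial>D) - (norm (\<integral>x. G w x \<partial>D))\<^sup>2 \<le> M"
    and M_nonneg: "M \<ge> 0"
    and P_pos: "P \<ge> 1"
    and K_pos: "K \<ge> 1"
    and \<gamma>_pos: "\<And>j. j \<ge> 1 \<Longrightarrow> \<gamma> j > 0"
    and B_pos: "\<And>j. j \<ge> 1 \<Longrightarrow> B j \<ge> 1"
    and lower: "\<exists>U. open U
        \<and> (\<forall>\<omega>\<in>space \<Omega>. \<forall>n\<ge>1. \<forall>j\<in>{1..P}. \<forall>k\<le>K.
              kavg_local G \<gamma> B \<omega> n j (wt \<omega> n) k \<in> U)
        \<and> (\<forall>\<omega>\<in>space \<Omega>. \<forall>n\<ge>1. wt \<omega> n \<in> U)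
        \<and> (\<forall>w\<in>U. Fstar \<le> F w)"
    and \<delta>_bounds: "0 < \<delta>" "\<delta> < 1"
    and step1: "\<And>j. j \<ge> 1 \<Longrightarrow>
        1 \<ge> L\<^sup>2 * (\<gamma> j)\<^sup>2 * (real K + 1) * (real K - 2) / 2 + L * \<gamma> j * real K"
    and step2: "\<And>j. j \<ge> 1 \<Longrightarrow> 1 - \<delta> \<ge> L\<^sup>2 * (\<gamma> j)\<^sup>2"
  shows "(\<forall>N::nat.
           (\<integral>\<^sup>+ \<omega>. ennreal (\<Sum>j=1..N. \<gamma> j / (\<Sum>i=1..N. \<gamma> i) * (norm (gradF (wt \<omega> j)))\<^sup>2) \<partial>\<Omega>)
           \<le> ennreal (2 * (F w1 - Fstar) / ((real K - 1 + \<delta>) * (\<Sum>i=1..N. \<gamma> i))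
               + (\<Sum>j=1..N. L * real K * (\<gamma> j)\<^sup>2 * M
                     / (real (B j) * (real K - 1 + \<delta>) * (\<Sum>i=1..N. \<gamma> i))
                     * (real K / real P + L * (2 * real K - 1) * (real K - 1) * \<gamma> j / 6))))
     \<and> ((filterlim (\<lambda>N. \<Sum>j=1..N. \<gamma> j) at_top sequentially
          \<and> summable (\<lambda>j. real K * (\<gamma> (Suc j))\<^sup>2 / (real P * real (B (Suc j))))
          \<and> summable (\<lambda>j. (\<gamma> (Suc j)) ^ 3))
        \<longrightarrow> ((\<lambda>N. \<integral>\<^sup>+ \<omega>. ennreal (\<Sum>j=1..N. \<gamma> j / (\<Sum>i=1..N. \<gamma> i) * (norm (gradF (wt \<omega> j)))\<^sup>2) \<partial>\<Omega>)
              \<longlonglongrightarrow> 0))"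
proof -
  interpret kavg D F gradF L M G \<gamma> B
    by (intro kavg.intro iid_samples.intro kavg_axioms.intro D_prob grad L_pos lip G_meas G_int G_int2
        unbiased variance M_nonneg)
  have low: "Fstar \<le> F (kavg_seq G P K \<gamma> B w1 \<omega> m)" if "\<omega> \<in> space (PiM UNIV (\<lambda>_. D))" for \<omega> m
  proof -
    from lower obtain U where U: "\<forall>\<omega>\<in>space \<Omega>. \<forall>n\<ge>1. wt \<omega> n \<in> U" "\<forall>w\<in>U. Fstar \<le> F w"
      by blast
    have "wt \<omega> (Suc m) \<in> U" using U(1) that unfolding \<Omega>_def by simp
    then show ?thesis using U(2) by (simp add: wt_def kavg_w_def)
  qed
  show ?thesis
    unfolding \<Omega>_def wt_def
    by (intro conjI allI impI weighted_gradient_bound[OF B_pos K_pos P_pos \<gamma>_pos step1 step2 \<delta>_bounds(1) low]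
        weighted_gradient_tendsto_zero[OF B_pos K_pos P_pos \<gamma>_pos step1 step2 \<delta>_bounds(1) low]) simp_all
qed

end
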